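(* Let $T$ be a CPTP map with operator-sum representation $\{M_k\}$, $\mathcal{H}_S$ an invariant subspace for which the DID construction terminates successfully, yielding $\mathcal{H}=\mathcal{H}_S\oplus\mathcal{H}_{T_1}\oplus\cdots\oplus\mathcal{H}_{T_N}$, and set $\mathcal{H}_{T_0}:=\mathcal{H}_S$. For $i=1,\dots,N$ let $\Pi_{T_j}$ be the orthogonal projection onto $\mathcal{H}_{T_j}$, $M_{k,P_i}=\Pi_{T_{i-1}}M_k|_{\mathcal{H}_{T_i}}:\mathcal{H}_{T_i}\to\mathcal{H}_{T_{i-1}}$, and $G_i=\sum_kM_{k,P_i}^\dagger M_{k,P_i}$, an operator on $\mathcal{H}_{T_i}$. Then $G_i$ is positive definite on $\mathcal{H}_{T_i}$, and for every density operator $\rho$ with $\Pi_{T_i}\rho\Pi_{T_i}=\rho$, $$\lambda_{\min}(G_i)\le \mathrm{Tr}(\Pi_{T_{i-1}}T(\rho))\le\lambda_{\max}(G_i)\le1,$$ where both bounds are attained by some such density operator.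
   Context: $\mathcal{H}$ is a finite-dimensional complex Hilbert space; $T$ is CPTP: $T(\rho)=\sum_kM_k\rho M_k^\dagger$, $\sum_kM_k^\dagger M_k=I$. A subspace $\mathcal{H}_S$ is invariant if $\rho\ge0$, $\mathrm{supp}(\rho)\subseteq\mathcal{H}_S$ implies $\mathrm{supp}(T(\rho))\subseteq\mathcal{H}_S$. DID construction: set $\mathcal{H}_{S_1}=\mathcal{H}_S$, $\mathcal{H}_{R_1}=\mathcal{H}_S^\perp$. At step $i$, let $M_{k,P'_i}=\Pi_{S_i}M_k|_{\mathcal{H}_{R_i}}:\mathcal{H}_{R_i}\to\mathcal{H}_{S_i}$ and $\mathcal{H}_{R_{i+1}}=\bigcap_k\ker(M_{k,P'_i})$. (1) If $\mathcal{H}_{R_{i+1}}=\mathcal{H}_{R_i}$, set $\mathcal{H}_{T_i}=\mathcal{H}_{R_i}$, stop (unsuccessful). (2) If $\mathcal{H}_{R_{i+1}}=\{0\}$, set $\mathcal{H}_{T_i}=\mathcal{H}_{R_i}$, stop (successful). (3) Otherwise $\mathcal{H}_{T_i}$ is the orthogonal complement of $\mathcal{H}_{R_{i+1}}$ in $\mathcal{H}_{R_i}$, $\mathcal{H}_{S_{i+1}}=\mathcal{H}_{S_i}\oplus\mathcal{H}_{T_i}$, iterate. $\lambda_{\min},\lambda_{\max}$ denote the least and largest eigenvalues. *)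

theory Defs
  imports "Jordan_Normal_Form.Matrix"
begin

definition cinner :: "complex vec \<Rightarrow> complex vec \<Rightarrow> complex" where
  "cinner u v = (\<Sum>i<dim_vec u. cnj (u $ i) * v $ i)"

definition adj :: "complex mat \<Rightarrow> complex mat" where
  "adj A = mat (dim_col A) (dim_row A) (\<lambda>(i,j). cnj (A $$ (j,i)))"

definition csubspace :: "nat \<Rightarrow> complex vec set \<Rightarrow> bool" where
  "csubspace n V \<longleftrightarrow> V \<subseteq> carrier_vec n \<and> 0\<^sub>v n \<in> V \<and>
     (\<forall>u\<in>V. \<forall>v\<in>V. u + v \<in> V) \<and> (\<forall>c::complex. \<forall>v\<in>V. c \<cdot>\<^sub>v v \<in> V)"

definition mrange :: "nat \<Rightarrow> complex mat \<Rightarrow> complex vec set" where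
  "mrange n A = {A *\<^sub>v v | v. v \<in> carrier_vec n}"

definition ocompl_in :: "complex vec set \<Rightarrow> complex vec set \<Rightarrow> complex vec set" where
  "ocompl_in W V = {w \<in> W. \<forall>v\<in>V. cinner v w = 0}"

definition osum :: "complex vec set \<Rightarrow> complex vec set \<Rightarrow> complex vec set" where
  "osum A B = {a + b | a b. a \<in> A \<and> b \<in> B}"

definition is_oproj :: "nat \<Rightarrow> complex vec set \<Rightarrow> complex mat \<Rightarrow> bool" where
  "is_oproj n V P \<longleftrightarrow> P \<in> carrier_mat n n \<and> P * P = P \<and> adj P = P \<and> mrange n P = V"

definition proj :: "nat \<Rightarrow> complex vec set \<Rightarrow> complex mat" where
  "proj n V = (THE P. is_oproj n V P)"

definition is_kraus :: "nat \<Rightarrow> complex mat list \<Rightarrow> bool" where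
  "is_kraus n Ms \<longleftrightarrow> (\<forall>M\<in>set Ms. M \<in> carrier_mat n n) \<and>
     foldr (\<lambda>M acc. adj M * M + acc) Ms (0\<^sub>m n n) = 1\<^sub>m n"

definition kraus_map :: "nat \<Rightarrow> complex mat list \<Rightarrow> complex mat \<Rightarrow> complex mat" where
  "kraus_map n Ms \<rho> = foldr (\<lambda>M acc. M * \<rho> * adj M + acc) Ms (0\<^sub>m n n)"

definition mtrace :: "complex mat \<Rightarrow> complex" where
  "mtrace A = (\<Sum>i<dim_row A. A $$ (i,i))"

definition psd :: "nat \<Rightarrow> complex mat \<Rightarrow> bool" where
  "psd n A \<longleftrightarrow> A \<in> carrier_mat n n \<and> adj A = A \<and>
     (\<forall>v\<in>carrier_vec n. Im (cinner v (A *\<^sub>v v)) = 0 \<and> Re (cinner v (A *\<^sub>v v)) \<ge> 0)"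

definition density :: "nat \<Rightarrow> complex mat \<Rightarrow> bool" where
  "density n \<rho> \<longleftrightarrow> psd n \<rho> \<and> mtrace \<rho> = 1"

text \<open>Support of a positive operator = its range.\<close>
definition invariant_subspace :: "nat \<Rightarrow> complex mat list \<Rightarrow> complex vec set \<Rightarrow> bool" where
  "invariant_subspace n Ms S \<longleftrightarrow>
     (\<forall>\<rho>. psd n \<rho> \<and> mrange n \<rho> \<subseteq> S \<longrightarrow> mrange n (kraus_map n Ms \<rho>) \<subseteq> S)"

text \<open>DID construction.  did_SR k = (S_{k+1}, R_{k+1}).\<close>
primrec did_SR :: "nat \<Rightarrow> complex mat list \<Rightarrow> complex vec set \<Rightarrow> nat \<Rightarrow> complex vec set \<times> complex vec set" where
  "did_SR n Ms S 0 = (S, ocompl_in (carrier_vec n) S)"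
| "did_SR n Ms S (Suc k) =
     (let Si = fst (did_SR n Ms S k); Ri = snd (did_SR n Ms S k);
          Rn = {v \<in> Ri. \<forall>M\<in>set Ms. proj n Si *\<^sub>v (M *\<^sub>v v) = 0\<^sub>v n}
      in (osum Si (ocompl_in Ri Rn), Rn))"

definition did_R :: "nat \<Rightarrow> complex mat list \<Rightarrow> complex vec set \<Rightarrow> nat \<Rightarrow> complex vec set" where
  "did_R n Ms S i = snd (did_SR n Ms S (i - 1))"

text \<open>T_0 = S, and T_i = R_i \<ominus> R_{i+1} for i \<ge> 1 (for the last step, where
  R_{N+1} = {0}, this is R_N as in case (2)).\<close>
definition did_T :: "nat \<Rightarrow> complex mat list \<Rightarrow> complex vec set \<Rightarrow> nat \<Rightarrow> complex vec set" where
  "did_T n Ms S i = (if i = 0 then S else ocompl_in (did_R n Ms S i) (did_R n Ms S (Suc i)))"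

definition did_success :: "nat \<Rightarrow> complex mat list \<Rightarrow> complex vec set \<Rightarrow> nat \<Rightarrow> bool" where
  "did_success n Ms S N \<longleftrightarrow> 1 \<le> N \<and>
     (\<forall>i\<in>{1..N}. did_R n Ms S (Suc i) \<noteq> did_R n Ms S i) \<and>
     (\<forall>i\<in>{1..<N}. did_R n Ms S (Suc i) \<noteq> {0\<^sub>v n}) \<and>
     did_R n Ms S (Suc N) = {0\<^sub>v n}"

text \<open>G_i = sum_k M_{k,P_i}^\<dagger> M_{k,P_i}, represented as the compressed matrix
  Pi_{T_i} (sum_k M_k^\<dagger> Pi_{T_{i-1}} M_k) Pi_{T_i}, viewed as an operator on T_i.\<close>
definition did_G :: "nat \<Rightarrow> complex mat list \<Rightarrow> complex vec set \<Rightarrow> nat \<Rightarrow> complex mat" where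
  "did_G n Ms S i =
     foldr (\<lambda>M acc. adj (proj n (did_T n Ms S (i - 1)) * M * proj n (did_T n Ms S i))
                    * (proj n (did_T n Ms S (i - 1)) * M * proj n (did_T n Ms S i)) + acc)
           Ms (0\<^sub>m n n)"

definition pos_def_on :: "complex vec set \<Rightarrow> complex mat \<Rightarrow> bool" where
  "pos_def_on V G \<longleftrightarrow> (\<forall>v\<in>V. v \<noteq> 0\<^sub>v (dim_vec v) \<longrightarrow>
     Im (cinner v (G *\<^sub>v v)) = 0 \<and> Re (cinner v (G *\<^sub>v v)) > 0)"

text \<open>Eigenvalues of G as an operator on V (G is Hermitian, so they are real).\<close>
definition eigs_on :: "complex vec set \<Rightarrow> complex mat \<Rightarrow> real set" where
  "eigs_on V G = {l. \<exists>v\<in>V. v \<noteq> 0\<^sub>v (dim_vec v) \<and> G *\<^sub>v v = complex_of_real l \<cdot>\<^sub>v v}"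

end

theory Submission
  imports Defs "Jordan_Normal_Form.Spectral_Radius"
begin

text \<open>
  For a state \<open>\<rho>\<close> supported on \<open>T\<^sub>i\<close>, cyclicity of the trace gives
  \<open>tr (\<Pi>\<^sub>T\<^sub>i\<^sub>-\<^sub>1 T(\<rho>)) = tr (G\<^sub>i \<rho>)\<close> with the compression \<open>G\<^sub>i = \<Sum>\<^sub>k (\<Pi>\<^sub>T\<^sub>i\<^sub>-\<^sub>1 M\<^sub>k \<Pi>\<^sub>T\<^sub>i)\<^sup>\<dagger> (\<Pi>\<^sub>T\<^sub>i\<^sub>-\<^sub>1 M\<^sub>k \<Pi>\<^sub>T\<^sub>i)\<close>.
  \<open>G\<^sub>i\<close> is Hermitian and maps into \<open>T\<^sub>i\<close>, so by the spectral theorem \<open>T\<^sub>i\<close> has an orthonormal basis of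
  eigenvectors, in which \<open>tr (G\<^sub>i \<rho>)\<close> is a convex combination of the eigenvalues; the extreme values
  are attained by the pure eigenstates.  Trace preservation \<open>\<Sum>\<^sub>k M\<^sub>k\<^sup>\<dagger> M\<^sub>k = I\<close> makes \<open>G\<^sub>i\<close> a
  contraction, so \<open>\<lambda>\<^sub>m\<^sub>a\<^sub>x \<le> 1\<close>; and the DID construction guarantees that every non-zero vector of \<open>T\<^sub>i\<close>
  is moved partly into \<open>T\<^sub>i\<^sub>-\<^sub>1\<close>, which is positive definiteness of \<open>G\<^sub>i\<close>.
\<close>

section \<open>Inner product, adjoint and trace\<close>

lemma vec_diff_zero_iff:
  fixes u v :: "'a :: group_add vec"
  assumes u: "u \<in> carrier_vec n" and v: "v \<in> carrier_vec n"
  shows "u - v = 0\<^sub>v n \<longleftrightarrow> u = v"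
proof
  assume h: "u - v = 0\<^sub>v n"
  show "u = v"
  proof (rule eq_vecI)
    fix i assume i: "i < dim_vec v"
    have "(u - v) $ i = 0" using h i v by simp
    thus "u $ i = v $ i" using u v i by simp
  qed (use u v in simp)
qed (use v in simp)

lemma cinner_carrier: "u \<in> carrier_vec n \<Longrightarrow> cinner u v = (\<Sum>i<n. cnj (u $ i) * v $ i)"
  by (simp add: cinner_def)

lemma cinner_add_right: "u \<in> carrier_vec n \<Longrightarrow> v \<in> carrier_vec n \<Longrightarrow> w \<in> carrier_vec n \<Longrightarrow>
  cinner u (v + w) = cinner u v + cinner u w"
  by (simp add: cinner_carrier distrib_left sum.distrib)

lemma cinner_minus_right: "u \<in> carrier_vec n \<Longrightarrow> v \<in> carrier_vec n \<Longrightarrow> w \<in> carrier_vec n \<Longrightarrow>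
  cinner u (v - w) = cinner u v - cinner u w"
  by (simp add: cinner_carrier right_diff_distrib sum_subtractf)

lemma cinner_smult_right: "u \<in> carrier_vec n \<Longrightarrow> v \<in> carrier_vec n \<Longrightarrow>
  cinner u (c \<cdot>\<^sub>v v) = c * cinner u v"
  by (simp add: cinner_carrier sum_distrib_left algebra_simps)

lemma cinner_add_left: "u \<in> carrier_vec n \<Longrightarrow> v \<in> carrier_vec n \<Longrightarrow>
  cinner (u + v) w = cinner u w + cinner v w"
  by (simp add: cinner_def distrib_right sum.distrib)

lemma cinner_smult_left: "u \<in> carrier_vec n \<Longrightarrow> cinner (c \<cdot>\<^sub>v u) w = cnj c * cinner u w"
  by (simp add: cinner_carrier sum_distrib_left algebra_simps)

lemma cinner_zero_right: "u \<in> carrier_vec n \<Longrightarrow> cinner u (0\<^sub>v n) = 0"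
  by (simp add: cinner_carrier)

lemma cinner_zero_left: "cinner (0\<^sub>v n) u = 0"
  by (simp add: cinner_def)

lemma cinner_cnj: "u \<in> carrier_vec n \<Longrightarrow> v \<in> carrier_vec n \<Longrightarrow> cinner v u = cnj (cinner u v)"
  by (simp add: cinner_carrier mult.commute)

lemma cinner_self_real: "cinner v v = complex_of_real (\<Sum>i<dim_vec v. (cmod (v $ i))^2)"
  unfolding cinner_def of_real_sum by (simp only: complex_norm_square mult.commute)

lemma cinner_self_Im: "Im (cinner v v) = 0"
  by (simp add: cinner_self_real)

lemma cinner_self_Re: "Re (cinner v v) \<ge> 0"
  by (simp add: cinner_self_real sum_nonneg)

lemma cinner_self_zero: assumes v: "v \<in> carrier_vec n" and z: "cinner v v = 0" shows "v = 0\<^sub>v n"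
proof -
  have "(\<Sum>i<dim_vec v. (cmod (v $ i))^2) = 0" using z unfolding cinner_self_real of_real_eq_0_iff .
  hence "\<forall>i\<in>{..<dim_vec v}. (cmod (v $ i))^2 = 0"
    by (subst sum_nonneg_eq_0_iff[symmetric]) auto
  thus ?thesis using v by (intro eq_vecI) auto
qed

lemma cinner_self_pos: "v \<in> carrier_vec n \<Longrightarrow> v \<noteq> 0\<^sub>v n \<Longrightarrow> Re (cinner v v) > 0"
  using cinner_self_Re[of v] cinner_self_zero[of v n] cinner_self_Im[of v]
  by (metis complex_eq_iff less_eq_real_def zero_complex.sel)

lemma adj_carrier[simp]: "A \<in> carrier_mat n m \<Longrightarrow> adj A \<in> carrier_mat m n"
  by (simp add: adj_def)

lemma adj_dims[simp]: "dim_row (adj A) = dim_col A" "dim_col (adj A) = dim_row A"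
  by (simp_all add: adj_def)

lemma adj_index[simp]: "i < dim_col A \<Longrightarrow> j < dim_row A \<Longrightarrow> adj A $$ (i,j) = cnj (A $$ (j,i))"
  by (simp add: adj_def)

lemma adj_adj[simp]: "adj (adj A) = A"
  by (intro eq_matI) auto

lemma adj_mult: "A \<in> carrier_mat n m \<Longrightarrow> B \<in> carrier_mat m k \<Longrightarrow> adj (A * B) = adj B * adj A"
  by (intro eq_matI) (auto simp: scalar_prod_def mult.commute)

lemma adj_add: "A \<in> carrier_mat n m \<Longrightarrow> B \<in> carrier_mat n m \<Longrightarrow> adj (A + B) = adj A + adj B"
  by (intro eq_matI) auto

lemma adj_zero[simp]: "adj (0\<^sub>m n m) = 0\<^sub>m m n"
  by (intro eq_matI) auto

lemma cinner_adj:
  assumes A: "A \<in> carrier_mat n n" and u: "u \<in> carrier_vec n" and v: "v \<in> carrier_vec n"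
  shows "cinner u (A *\<^sub>v v) = cinner (adj A *\<^sub>v u) v"
proof -
  have "cinner u (A *\<^sub>v v) = (\<Sum>j<n. \<Sum>i<n. cnj (u $ j) * A $$ (j,i) * v $ i)"
    using A u v by (simp add: cinner_carrier scalar_prod_def atLeast0LessThan sum_distrib_left mult.assoc)
  also have "\<dots> = (\<Sum>i<n. \<Sum>j<n. cnj (u $ j) * A $$ (j,i) * v $ i)"
    by (rule sum.swap)
  also have "\<dots> = (\<Sum>i<n. cnj (\<Sum>j<n. cnj (A $$ (j,i)) * u $ j) * v $ i)"
    by (simp add: sum_distrib_right sum_distrib_left mult_ac)
  also have "\<dots> = cinner (adj A *\<^sub>v u) v"
    using A u v by (simp add: cinner_def scalar_prod_def atLeast0LessThan)
  finally show ?thesis .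
qed

lemma cinner_herm: "A \<in> carrier_mat n n \<Longrightarrow> adj A = A \<Longrightarrow> u \<in> carrier_vec n \<Longrightarrow> v \<in> carrier_vec n \<Longrightarrow>
  cinner u (A *\<^sub>v v) = cinner (A *\<^sub>v u) v"
  using cinner_adj by metis

lemma cinner_adj_mult: "A \<in> carrier_mat n n \<Longrightarrow> v \<in> carrier_vec n \<Longrightarrow>
  cinner v ((adj A * A) *\<^sub>v v) = cinner (A *\<^sub>v v) (A *\<^sub>v v)"
  using cinner_adj[of "adj A" n v "A *\<^sub>v v"] by (simp add: assoc_mult_mat_vec[of "adj A" n n A n v])

lemma mat_eq_by_vec:
  fixes A B :: "complex mat"
  assumes A: "A \<in> carrier_mat n n" and B: "B \<in> carrier_mat n n"
    and eq: "\<And>x. x \<in> carrier_vec n \<Longrightarrow> A *\<^sub>v x = B *\<^sub>v x"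
  shows "A = B"
proof (rule eq_matI)
  fix i j assume i: "i < dim_row B" and j: "j < dim_col B"
  have "(A *\<^sub>v unit_vec n j) $ i = (B *\<^sub>v unit_vec n j) $ i" using eq[of "unit_vec n j"] by simp
  thus "A $$ (i,j) = B $$ (i,j)" using A B i j by simp
qed (use A B in auto)

lemma mtrace_comm:
  fixes A B :: "complex mat"
  assumes A: "A \<in> carrier_mat n m" and B: "B \<in> carrier_mat m n"
  shows "mtrace (A * B) = mtrace (B * A)"
proof -
  have "mtrace (A * B) = (\<Sum>i<n. \<Sum>k<m. A $$ (i,k) * B $$ (k,i))"
    using A B by (simp add: mtrace_def scalar_prod_def atLeast0LessThan)
  also have "\<dots> = (\<Sum>k<m. \<Sum>i<n. B $$ (k,i) * A $$ (i,k))"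
    by (subst sum.swap) (simp add: mult.commute)
  also have "\<dots> = mtrace (B * A)"
    using A B by (simp add: mtrace_def scalar_prod_def atLeast0LessThan)
  finally show ?thesis .
qed

lemma mtrace_add: "A \<in> carrier_mat n n \<Longrightarrow> B \<in> carrier_mat n n \<Longrightarrow> mtrace (A + B) = mtrace A + mtrace B"
  by (simp add: mtrace_def sum.distrib)

lemma mult_carrier_nn[simp]: "A \<in> carrier_mat n n \<Longrightarrow> B \<in> carrier_mat n n \<Longrightarrow> A * B \<in> carrier_mat n n"
  by (metis mult_carrier_mat)

lemma mult_vec_carrier_nn[simp]: "A \<in> carrier_mat n n \<Longrightarrow> v \<in> carrier_vec n \<Longrightarrow> A *\<^sub>v v \<in> carrier_vec n"
  by (metis mult_mat_vec_carrier)

lemma mult_zero_vec_nn[simp]: "A \<in> carrier_mat n n \<Longrightarrow> A *\<^sub>v 0\<^sub>v n = 0\<^sub>v n"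
  by (intro eq_vecI) (auto simp: scalar_prod_def)

section \<open>Finite sums of matrices\<close>

text \<open>Kraus sums \<open>\<Sum>\<^sub>k f M\<^sub>k\<close> are right folds over the list of Kraus operators; \<open>msum\<close> names
  this fold so that its algebra (linearity, trace, adjoint) is proved once.\<close>

definition msum :: "nat \<Rightarrow> ('a \<Rightarrow> complex mat) \<Rightarrow> 'a list \<Rightarrow> complex mat" where
  "msum n f xs = foldr (\<lambda>x acc. f x + acc) xs (0\<^sub>m n n)"

lemma msum_Nil[simp]: "msum n f [] = 0\<^sub>m n n"
  by (simp add: msum_def)

lemma msum_Cons[simp]: "msum n f (x # xs) = f x + msum n f xs"
  by (simp add: msum_def)

lemma msum_carrier: "(\<And>x. x \<in> set xs \<Longrightarrow> f x \<in> carrier_mat n n) \<Longrightarrow> msum n f xs \<in> carrier_mat n n"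
  by (induction xs) auto

lemma msum_cong: "(\<And>x. x \<in> set xs \<Longrightarrow> f x = g x) \<Longrightarrow> msum n f xs = msum n g xs"
  by (induction xs) auto

lemma msum_mult_left:
  assumes X: "X \<in> carrier_mat n n" and f: "\<And>x. x \<in> set xs \<Longrightarrow> f x \<in> carrier_mat n n"
  shows "X * msum n f xs = msum n (\<lambda>x. X * f x) xs"
  using f
proof (induction xs)
  case (Cons x xs)
  have fx: "f x \<in> carrier_mat n n" and fs: "msum n f xs \<in> carrier_mat n n"
    using Cons.prems by (auto intro: msum_carrier)
  thus ?case using Cons by (simp add: mult_add_distrib_mat[OF X fx fs])
qed (use X in simp)

lemma msum_mult_right:
  assumes X: "X \<in> carrier_mat n n" and f: "\<And>x. x \<in> set xs \<Longrightarrow> f x \<in> carrier_mat n n"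
  shows "msum n f xs * X = msum n (\<lambda>x. f x * X) xs"
  using f
proof (induction xs)
  case (Cons x xs)
  have fx: "f x \<in> carrier_mat n n" and fs: "msum n f xs \<in> carrier_mat n n"
    using Cons.prems by (auto intro: msum_carrier)
  thus ?case using Cons by (simp add: add_mult_distrib_mat[OF fx fs X])
qed (use X in simp)

lemma msum_trace:
  "(\<And>x. x \<in> set xs \<Longrightarrow> f x \<in> carrier_mat n n) \<Longrightarrow> mtrace (msum n f xs) = (\<Sum>x\<leftarrow>xs. mtrace (f x))"
proof (induction xs)
  case (Cons x xs)
  have fx: "f x \<in> carrier_mat n n" and fs: "msum n f xs \<in> carrier_mat n n"
    using Cons.prems by (auto intro: msum_carrier)
  thus ?case using Cons by (simp add: mtrace_add[OF fx fs])
qed (simp add: mtrace_def)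

lemma msum_adj:
  "(\<And>x. x \<in> set xs \<Longrightarrow> f x \<in> carrier_mat n n) \<Longrightarrow> adj (msum n f xs) = msum n (\<lambda>x. adj (f x)) xs"
  by (induction xs) (auto simp: adj_add[of _ n n] msum_carrier)

lemma msum_quadratic:
  assumes v: "v \<in> carrier_vec n" and f: "\<And>x. x \<in> set xs \<Longrightarrow> f x \<in> carrier_mat n n"
  shows "cinner v (msum n f xs *\<^sub>v v) = (\<Sum>x\<leftarrow>xs. cinner v (f x *\<^sub>v v))"
  using f
proof (induction xs)
  case Nil
  have "0\<^sub>m n n *\<^sub>v v = 0\<^sub>v n" using v by (intro eq_vecI) (auto simp: scalar_prod_def)
  thus ?case using v by (simp add: cinner_zero_right)
next
  case (Cons x xs)
  have fx: "f x \<in> carrier_mat n n" and fs: "msum n f xs \<in> carrier_mat n n"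
    using Cons.prems by (auto intro: msum_carrier)
  show ?case using Cons fx fs v
    by (simp add: add_mult_distrib_mat_vec[OF fx fs v] cinner_add_right[of v n])
qed

lemma Re_sum_list: "Re (\<Sum>x\<leftarrow>xs. f x) = (\<Sum>x\<leftarrow>xs. Re (f x))"
  by (induction xs) auto

lemma Im_sum_list: "Im (\<Sum>x\<leftarrow>xs. f x) = (\<Sum>x\<leftarrow>xs. Im (f x))"
  by (induction xs) auto

lemma sum_list_cong: "(\<And>x. x \<in> set xs \<Longrightarrow> f x = g x) \<Longrightarrow> (\<Sum>x\<leftarrow>xs. f x) = (\<Sum>x\<leftarrow>xs. g x)"
  by (simp cong: map_cong)

lemma sum_list_pos:
  fixes f :: "'a \<Rightarrow> real"
  assumes nonneg: "\<And>x. x \<in> set xs \<Longrightarrow> f x \<ge> 0" and y: "y \<in> set xs" and pos: "f y > 0"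
  shows "(\<Sum>x\<leftarrow>xs. f x) > 0"
  using nonneg y
proof (induction xs)
  case (Cons a xs)
  have "0 \<le> (\<Sum>x\<leftarrow>xs. f x)" using Cons.prems(1) by (intro sum_list_nonneg) auto
  moreover have "0 \<le> f a" using Cons.prems(1) by auto
  moreover have "y \<noteq> a \<Longrightarrow> (\<Sum>x\<leftarrow>xs. f x) > 0" using Cons by simp
  ultimately show ?case using pos by (cases "y = a") auto
qed simp

section \<open>Subspaces and orthonormal bases\<close>

lemma csubspace_carrier: "csubspace n V \<Longrightarrow> v \<in> V \<Longrightarrow> v \<in> carrier_vec n"
  by (auto simp: csubspace_def)

lemma csubspace_zero: "csubspace n V \<Longrightarrow> 0\<^sub>v n \<in> V"
  by (auto simp: csubspace_def)

lemma csubspace_add: "csubspace n V \<Longrightarrow> u \<in> V \<Longrightarrow> v \<in> V \<Longrightarrow> u + v \<in> V"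
  by (auto simp: csubspace_def)

lemma csubspace_smult: "csubspace n V \<Longrightarrow> v \<in> V \<Longrightarrow> c \<cdot>\<^sub>v v \<in> V"
  by (auto simp: csubspace_def)

lemma csubspace_minus: assumes V: "csubspace n V" and u: "u \<in> V" and v: "v \<in> V" shows "u - v \<in> V"
proof -
  have "u - v = u + (-1) \<cdot>\<^sub>v v" using V u v by (intro eq_vecI) (auto dest: csubspace_carrier)
  thus ?thesis using csubspace_add[OF V u csubspace_smult[OF V v]] by simp
qed

lemma csubspace_carrier_vec: "csubspace n (carrier_vec n)"
  by (auto simp: csubspace_def)

lemma csubspace_osum: assumes A: "csubspace n A" and B: "csubspace n B"
  shows "csubspace n (osum A B)"
  unfolding csubspace_def
proof (intro conjI ballI allI)
  show "osum A B \<subseteq> carrier_vec n"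
    using csubspace_carrier[OF A] csubspace_carrier[OF B] by (auto simp: osum_def)
  show "0\<^sub>v n \<in> osum A B" unfolding osum_def using csubspace_zero[OF A] csubspace_zero[OF B]
    by (intro CollectI exI[of _ "0\<^sub>v n"]) auto
next
  fix u v assume "u \<in> osum A B" "v \<in> osum A B"
  then obtain a b a' b' where ab: "a \<in> A" "b \<in> B" "a' \<in> A" "b' \<in> B" "u = a + b" "v = a' + b'"
    unfolding osum_def by blast
  have c: "a \<in> carrier_vec n" "b \<in> carrier_vec n" "a' \<in> carrier_vec n" "b' \<in> carrier_vec n"
    using ab A B csubspace_carrier by blast+
  have "u + v = (a + a') + (b + b')" using ab c by (intro eq_vecI) auto
  thus "u + v \<in> osum A B" unfolding osum_def using csubspace_add[OF A ab(1,3)] csubspace_add[OF B ab(2,4)]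
    by blast
next
  fix c :: complex and v assume "v \<in> osum A B"
  then obtain a b where ab: "a \<in> A" "b \<in> B" "v = a + b" unfolding osum_def by blast
  have cc: "a \<in> carrier_vec n" "b \<in> carrier_vec n" using ab A B csubspace_carrier by blast+
  have "c \<cdot>\<^sub>v v = c \<cdot>\<^sub>v a + c \<cdot>\<^sub>v b" using ab cc by (intro eq_vecI) (auto simp: distrib_left)
  thus "c \<cdot>\<^sub>v v \<in> osum A B" unfolding osum_def using csubspace_smult[OF A ab(1)] csubspace_smult[OF B ab(2)]
    by blast
qed

lemma csubspace_ocompl: assumes W: "csubspace n W" and V: "V \<subseteq> carrier_vec n"
  shows "csubspace n (ocompl_in W V)"
  unfolding csubspace_def ocompl_in_def
proof (intro conjI ballI allI)
  show "{w \<in> W. \<forall>v\<in>V. cinner v w = 0} \<subseteq> carrier_vec n" using W csubspace_carrier by blast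
  show "0\<^sub>v n \<in> {w \<in> W. \<forall>v\<in>V. cinner v w = 0}" using csubspace_zero[OF W] V
    by (auto simp: cinner_zero_right)
next
  fix u w assume u: "u \<in> {w \<in> W. \<forall>v\<in>V. cinner v w = 0}" and w: "w \<in> {w \<in> W. \<forall>v\<in>V. cinner v w = 0}"
  have "u \<in> carrier_vec n" "w \<in> carrier_vec n" using u w W csubspace_carrier by blast+
  thus "u + w \<in> {w \<in> W. \<forall>v\<in>V. cinner v w = 0}" using u w V csubspace_add[OF W]
    by (auto simp: cinner_add_right[of _ n])
next
  fix c :: complex and w assume w: "w \<in> {w \<in> W. \<forall>v\<in>V. cinner v w = 0}"
  have "w \<in> carrier_vec n" using w W csubspace_carrier by blast
  thus "c \<cdot>\<^sub>v w \<in> {w \<in> W. \<forall>v\<in>V. cinner v w = 0}" using w V csubspace_smult[OF W]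
    by (auto simp: cinner_smult_right[of _ n])
qed

definition lincomb :: "nat \<Rightarrow> nat \<Rightarrow> (nat \<Rightarrow> complex) \<Rightarrow> (nat \<Rightarrow> complex vec) \<Rightarrow> complex vec" where
  "lincomb n m c u = vec n (\<lambda>a. \<Sum>j<m. c j * u j $ a)"

definition orthonormal :: "nat \<Rightarrow> complex vec set \<Rightarrow> nat \<Rightarrow> (nat \<Rightarrow> complex vec) \<Rightarrow> bool" where
  "orthonormal n V m u \<longleftrightarrow> (\<forall>j<m. u j \<in> V \<and> u j \<in> carrier_vec n) \<and>
     (\<forall>j<m. \<forall>k<m. cinner (u j) (u k) = (if j = k then 1 else 0))"

definition ocomplete :: "nat \<Rightarrow> complex vec set \<Rightarrow> nat \<Rightarrow> (nat \<Rightarrow> complex vec) \<Rightarrow> bool" where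
  "ocomplete n V m u \<longleftrightarrow> (\<forall>w\<in>V. w = lincomb n m (\<lambda>j. cinner (u j) w) u)"

lemma lincomb_carrier[simp]: "lincomb n m c u \<in> carrier_vec n"
  by (simp add: lincomb_def)

lemma lincomb_dim[simp]: "dim_vec (lincomb n m c u) = n"
  by (simp add: lincomb_def)

lemma lincomb_0[simp]: "lincomb n 0 c u = 0\<^sub>v n"
  by (intro eq_vecI) (simp_all add: lincomb_def)

lemma lincomb_Suc: "u m \<in> carrier_vec n \<Longrightarrow> lincomb n (Suc m) c u = lincomb n m c u + c m \<cdot>\<^sub>v u m"
  by (intro eq_vecI) (auto simp: lincomb_def)

lemma lincomb_cong: "(\<And>j. j < m \<Longrightarrow> c j = d j) \<Longrightarrow> lincomb n m c u = lincomb n m d u"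
  by (simp add: lincomb_def)

lemma lincomb_zero: "(\<And>j. j < m \<Longrightarrow> c j = 0) \<Longrightarrow> lincomb n m c u = 0\<^sub>v n"
  by (intro eq_vecI) (auto simp: lincomb_def)

lemma lincomb_in: assumes V: "csubspace n V" and u: "\<And>j. j < m \<Longrightarrow> u j \<in> V"
  shows "lincomb n m c u \<in> V"
  using u
proof (induction m)
  case 0 thus ?case using csubspace_zero[OF V] by simp
next
  case (Suc m)
  have um: "u m \<in> V" using Suc.prems by simp
  hence "u m \<in> carrier_vec n" using V csubspace_carrier by blast
  thus ?case using Suc csubspace_add[OF V _ csubspace_smult[OF V um]] by (simp add: lincomb_Suc)
qed

lemma cinner_lincomb_right: assumes w: "w \<in> carrier_vec n"
  shows "cinner w (lincomb n m c u) = (\<Sum>j<m. c j * cinner w (u j))"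
proof -
  have "cinner w (lincomb n m c u) = (\<Sum>a<n. \<Sum>j<m. cnj (w $ a) * (c j * u j $ a))"
    using w by (simp add: cinner_carrier lincomb_def sum_distrib_left)
  also have "\<dots> = (\<Sum>j<m. \<Sum>a<n. cnj (w $ a) * (c j * u j $ a))" by (rule sum.swap)
  also have "\<dots> = (\<Sum>j<m. c j * cinner w (u j))"
    using w by (simp add: cinner_carrier sum_distrib_left mult_ac)
  finally show ?thesis .
qed

lemma cinner_lincomb_left: assumes w: "w \<in> carrier_vec n" and u: "\<And>j. j < m \<Longrightarrow> u j \<in> carrier_vec n"
  shows "cinner (lincomb n m c u) w = (\<Sum>j<m. cnj (c j) * cinner (u j) w)"
  using w u by (simp add: cinner_cnj[of w n "lincomb n m c u"] cinner_lincomb_right cinner_cnj[of w n])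

lemma ortho_carrier: "orthonormal n V m u \<Longrightarrow> j < m \<Longrightarrow> u j \<in> carrier_vec n"
  by (simp add: orthonormal_def)

lemma ortho_in: "orthonormal n V m u \<Longrightarrow> j < m \<Longrightarrow> u j \<in> V"
  by (simp add: orthonormal_def)

lemma ortho_inner: "orthonormal n V m u \<Longrightarrow> j < m \<Longrightarrow> k < m \<Longrightarrow>
  cinner (u j) (u k) = (if j = k then 1 else 0)"
  by (simp add: orthonormal_def)

lemma ortho_nonzero: "orthonormal n V m u \<Longrightarrow> j < m \<Longrightarrow> u j \<noteq> 0\<^sub>v n"
  using ortho_inner[of n V m u j j] by (auto simp: cinner_zero_left)

lemma cinner_lincomb_ortho: assumes o: "orthonormal n V m u" and k: "k < m"
  shows "cinner (u k) (lincomb n m c u) = c k"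
proof -
  have "cinner (u k) (lincomb n m c u) = (\<Sum>j<m. c j * (if k = j then 1 else 0))"
    using o k by (simp add: cinner_lincomb_right ortho_carrier ortho_inner)
  also have "\<dots> = c k" using k by (simp add: if_distrib cong: if_cong)
  finally show ?thesis .
qed

lemma lincomb_norm: assumes o: "orthonormal n V m u"
  shows "cinner (lincomb n m c u) (lincomb n m c u) = (\<Sum>j<m. complex_of_real ((cmod (c j))^2))"
proof -
  have "cinner (lincomb n m c u) (lincomb n m c u) = (\<Sum>j<m. cnj (c j) * c j)"
    using o by (simp add: cinner_lincomb_left ortho_carrier cinner_lincomb_ortho)
  also have "\<dots> = (\<Sum>j<m. complex_of_real ((cmod (c j))^2))"
    by (intro sum.cong refl) (simp only: complex_norm_square mult.commute)
  finally show ?thesis .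
qed

lemma bessel: assumes o: "orthonormal n V m u" and x: "x \<in> carrier_vec n"
  shows "(\<Sum>j<m. (cmod (cinner (u j) x))^2) \<le> Re (cinner x x)"
proof -
  define c where "c = (\<lambda>j. cinner (u j) x)"
  define y where "y = lincomb n m c u"
  define z where "z = x - y"
  have yc: "y \<in> carrier_vec n" and zc: "z \<in> carrier_vec n" using x by (auto simp: y_def z_def)
  have xyz: "x = y + z" using x yc by (auto simp: z_def)
  have uz: "cinner (u k) z = 0" if k: "k < m" for k
    using o k x yc by (simp add: z_def cinner_minus_right[of _ n] ortho_carrier y_def cinner_lincomb_ortho c_def)
  have yz: "cinner y z = 0" using zc o uz by (simp add: y_def cinner_lincomb_left ortho_carrier)
  have zy: "cinner z y = 0" using yz cinner_cnj[OF yc zc] by simp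
  have "cinner x x = cinner y y + cinner z z"
    unfolding xyz using yc zc yz zy by (simp add: cinner_add_left[of _ n] cinner_add_right[of _ n])
  moreover have "Re (cinner y y) = (\<Sum>j<m. (cmod (c j))^2)"
    unfolding y_def lincomb_norm[OF o] by simp
  ultimately show ?thesis using cinner_self_Re[of z] by (simp add: c_def)
qed

lemma cinner_unit_vec: "u \<in> carrier_vec n \<Longrightarrow> a < n \<Longrightarrow> cinner u (unit_vec n a) = cnj (u $ a)"
  by (simp add: cinner_carrier unit_vec_def if_distrib cong: if_cong)

lemma ortho_le: assumes o: "orthonormal n V m u" shows "m \<le> n"
proof -
  have "real m = (\<Sum>j<m. Re (cinner (u j) (u j)))"
    using o by (simp add: ortho_inner)
  also have "\<dots> = (\<Sum>j<m. \<Sum>a<n. (cmod (u j $ a))^2)"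
    by (intro sum.cong refl) (simp add: cinner_self_real carrier_vecD[OF ortho_carrier[OF o]])
  also have "\<dots> = (\<Sum>a<n. \<Sum>j<m. (cmod (cinner (u j) (unit_vec n a)))^2)"
    by (subst sum.swap) (intro sum.cong refl, simp add: cinner_unit_vec ortho_carrier[OF o])
  also have "\<dots> \<le> (\<Sum>a<n. Re (cinner (unit_vec n a) (unit_vec n a)))"
    by (intro sum_mono bessel[OF o]) simp
  also have "\<dots> = real n"
    by (simp add: cinner_unit_vec)
  finally show ?thesis by simp
qed

lemma ortho_extend: assumes o: "orthonormal n V m u" and z: "z \<in> V" "z \<in> carrier_vec n"
  and zz: "cinner z z = 1" and uz: "\<And>k. k < m \<Longrightarrow> cinner (u k) z = 0"
  shows "orthonormal n V (Suc m) (u(m := z))"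
proof -
  have zu: "cinner z (u k) = 0" if "k < m" for k
    using uz[OF that] cinner_cnj[OF ortho_carrier[OF o that] z(2)] by simp
  show ?thesis using o z zz uz zu by (auto simp: less_Suc_eq orthonormal_def)
qed

lemma normalize_vec: assumes z: "z \<in> carrier_vec n" "z \<noteq> 0\<^sub>v n"
  shows "\<exists>c. cinner (c \<cdot>\<^sub>v z) (c \<cdot>\<^sub>v z) = 1"
proof -
  define r where "r = Re (cinner z z)"
  have r: "r > 0" using cinner_self_pos[OF z] by (simp add: r_def)
  have zz: "cinner z z = complex_of_real r" using cinner_self_Im[of z] by (simp add: r_def complex_eq_iff)
  define c where "c = complex_of_real (1 / sqrt r)"
  have "cinner (c \<cdot>\<^sub>v z) (c \<cdot>\<^sub>v z) = cnj c * (c * cinner z z)"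
    using z by (simp add: cinner_smult_left[of _ n] cinner_smult_right[of _ n])
  also have "\<dots> = complex_of_real (1 / sqrt r * (1 / sqrt r) * r)"
    by (simp only: c_def zz complex_cnj_complex_of_real of_real_mult mult.assoc)
  also have "1 / sqrt r * (1 / sqrt r) * r = 1" using r by (simp add: field_simps)
  finally show ?thesis by (intro exI[of _ c]) simp
qed

lemma incomplete_unit_vec: assumes V: "csubspace n V" and o: "orthonormal n V m u"
  and nc: "\<not> ocomplete n V m u"
  shows "\<exists>z. z \<in> V \<and> z \<in> carrier_vec n \<and> cinner z z = 1 \<and> (\<forall>k<m. cinner (u k) z = 0)"
proof -
  obtain w where w: "w \<in> V" and ne: "w \<noteq> lincomb n m (\<lambda>j. cinner (u j) w) u"
    using nc unfolding ocomplete_def by blast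
  define y where "y = lincomb n m (\<lambda>j. cinner (u j) w) u"
  define z where "z = w - y"
  have wc: "w \<in> carrier_vec n" using V w csubspace_carrier by blast
  have zV: "z \<in> V" unfolding z_def y_def by (rule csubspace_minus[OF V w lincomb_in[OF V ortho_in[OF o]]])
  have zc: "z \<in> carrier_vec n" using wc by (simp add: z_def y_def)
  have z0: "z \<noteq> 0\<^sub>v n" using ne vec_diff_zero_iff[OF wc lincomb_carrier] by (simp add: z_def y_def)
  have uz: "cinner (u k) z = 0" if "k < m" for k
    using that wc o by (simp add: z_def y_def cinner_minus_right[of _ n] ortho_carrier cinner_lincomb_ortho)
  obtain c where c: "cinner (c \<cdot>\<^sub>v z) (c \<cdot>\<^sub>v z) = 1" using normalize_vec[OF zc z0] by blast
  show ?thesis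
    using c zc uz o csubspace_smult[OF V zV]
    by (intro exI[of _ "c \<cdot>\<^sub>v z"]) (auto simp: cinner_smult_right[of _ n] ortho_carrier)
qed

text \<open>Greedy construction: if every incomplete orthonormal family with property \<open>good\<close> can be
  extended by one vector keeping \<open>good\<close>, then (since lengths are bounded by \<open>n\<close>) a complete
  \<open>good\<close> family exists.\<close>

lemma orthonormal_greedy:
  assumes ext: "\<And>m u. orthonormal n V m u \<Longrightarrow> good m u \<Longrightarrow> \<not> ocomplete n V m u \<Longrightarrow>
      \<exists>u'. orthonormal n V (Suc m) u' \<and> good (Suc m) u'"
    and good0: "good 0 u0"
  shows "\<exists>m u. orthonormal n V m u \<and> good m u \<and> ocomplete n V m u"
proof -
  have "\<exists>m u. orthonormal n V m u \<and> good m u \<and> (ocomplete n V m u \<or> k \<le> m)" for k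
  proof (induction k)
    case 0 thus ?case using good0 by (intro exI[of _ 0] exI[of _ u0]) (simp add: orthonormal_def)
  next
    case (Suc k)
    then obtain m u where mu: "orthonormal n V m u" "good m u" "ocomplete n V m u \<or> k \<le> m" by blast
    show ?case
    proof (cases "ocomplete n V m u")
      case False
      then obtain u' where "orthonormal n V (Suc m) u'" "good (Suc m) u'" using ext mu by blast
      thus ?thesis using mu False by (intro exI[of _ "Suc m"] exI[of _ u']) auto
    qed (use mu in blast)
  qed
  from this[of "Suc n"] obtain m u where "orthonormal n V m u" "good m u" "ocomplete n V m u \<or> Suc n \<le> m"
    by blast
  thus ?thesis using ortho_le by fastforce
qed

lemma onb_exists: assumes V: "csubspace n V"
  shows "\<exists>m u. orthonormal n V m u \<and> ocomplete n V m u"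
proof -
  have "\<exists>m u. orthonormal n V m u \<and> True \<and> ocomplete n V m u"
  proof (rule orthonormal_greedy)
    fix m u assume o: "orthonormal n V m u" and nc: "\<not> ocomplete n V m u"
    then obtain z where z: "z \<in> V" "z \<in> carrier_vec n" "cinner z z = 1" "\<forall>k<m. cinner (u k) z = 0"
      using incomplete_unit_vec[OF V] by blast
    show "\<exists>u'. orthonormal n V (Suc m) u' \<and> True"
      using ortho_extend[OF o z(1,2,3)] z(4) by blast
  qed simp
  thus ?thesis by blast
qed

section \<open>Orthogonal projections\<close>

text \<open>This is how \<open>proj\<close> is shown to be well defined.\<close>

definition basis_proj :: "nat \<Rightarrow> nat \<Rightarrow> (nat \<Rightarrow> complex vec) \<Rightarrow> complex mat" where
  "basis_proj n m u = mat n n (\<lambda>(a,b). \<Sum>j<m. u j $ a * cnj (u j $ b))"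

lemma basis_proj_carrier[simp]: "basis_proj n m u \<in> carrier_mat n n"
  by (simp add: basis_proj_def)

lemma basis_proj_mult_vec: assumes x: "x \<in> carrier_vec n" and u: "\<And>j. j < m \<Longrightarrow> u j \<in> carrier_vec n"
  shows "basis_proj n m u *\<^sub>v x = lincomb n m (\<lambda>j. cinner (u j) x) u"
proof (rule eq_vecI)
  fix a assume "a < dim_vec (lincomb n m (\<lambda>j. cinner (u j) x) u)"
  hence a: "a < n" by simp
  have "(basis_proj n m u *\<^sub>v x) $ a = (\<Sum>b<n. (\<Sum>j<m. u j $ a * cnj (u j $ b)) * x $ b)"
    using a x by (simp add: basis_proj_def scalar_prod_def atLeast0LessThan)
  also have "\<dots> = (\<Sum>j<m. \<Sum>b<n. u j $ a * cnj (u j $ b) * x $ b)"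
    by (simp add: sum_distrib_right) (rule sum.swap)
  also have "\<dots> = lincomb n m (\<lambda>j. cinner (u j) x) u $ a"
    using a carrier_vecD[OF u] by (auto simp: lincomb_def cinner_def sum_distrib_left mult_ac intro!: sum.cong)
  finally show "(basis_proj n m u *\<^sub>v x) $ a = lincomb n m (\<lambda>j. cinner (u j) x) u $ a" .
qed (simp add: basis_proj_def)

lemma basis_proj_oproj: assumes V: "csubspace n V" and o: "orthonormal n V m u" and c: "ocomplete n V m u"
  shows "is_oproj n V (basis_proj n m u)"
proof -
  let ?P = "basis_proj n m u"
  have Pv: "?P *\<^sub>v x = lincomb n m (\<lambda>j. cinner (u j) x) u" if "x \<in> carrier_vec n" for x
    using basis_proj_mult_vec[OF that ortho_carrier[OF o]] .
  have PP: "?P * ?P = ?P"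
  proof (rule mat_eq_by_vec[of _ n])
    fix x :: "complex vec" assume x: "x \<in> carrier_vec n"
    have "(?P * ?P) *\<^sub>v x = ?P *\<^sub>v (?P *\<^sub>v x)"
      by (rule assoc_mult_mat_vec[OF basis_proj_carrier basis_proj_carrier x])
    also have "\<dots> = lincomb n m (\<lambda>j. cinner (u j) (lincomb n m (\<lambda>j. cinner (u j) x) u)) u"
      using x by (simp add: Pv)
    also have "\<dots> = ?P *\<^sub>v x"
      using x by (simp add: Pv cinner_lincomb_ortho[OF o] cong: lincomb_cong)
    finally show "(?P * ?P) *\<^sub>v x = ?P *\<^sub>v x" .
  qed simp_all
  have adjP: "adj ?P = ?P"
    by (intro eq_matI) (simp_all add: basis_proj_def mult.commute)
  have "mrange n ?P \<subseteq> V" unfolding mrange_def using lincomb_in[OF V ortho_in[OF o]] Pv by auto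
  moreover have "V \<subseteq> mrange n ?P"
  proof
    fix w assume w: "w \<in> V"
    hence wc: "w \<in> carrier_vec n" using csubspace_carrier[OF V] by blast
    have "w = ?P *\<^sub>v w" using c w Pv[OF wc] unfolding ocomplete_def by simp
    thus "w \<in> mrange n ?P" unfolding mrange_def using wc by blast
  qed
  ultimately show ?thesis unfolding is_oproj_def using PP adjP by simp
qed

lemma oproj_subset: "is_oproj n V P \<Longrightarrow> V \<subseteq> carrier_vec n"
  by (auto simp: is_oproj_def mrange_def)

lemma oproj_in: "is_oproj n V P \<Longrightarrow> x \<in> carrier_vec n \<Longrightarrow> P *\<^sub>v x \<in> V"
  by (auto simp: is_oproj_def mrange_def)

lemma oproj_fix: assumes P: "is_oproj n V P" and v: "v \<in> V" shows "P *\<^sub>v v = v"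
proof -
  obtain w where w: "w \<in> carrier_vec n" and vw: "v = P *\<^sub>v w"
    using P v by (auto simp: is_oproj_def mrange_def)
  have Pc: "P \<in> carrier_mat n n" and PP: "P * P = P" using P by (auto simp: is_oproj_def)
  have "P *\<^sub>v v = (P * P) *\<^sub>v w" using Pc w by (simp add: vw)
  thus ?thesis using PP by (simp add: vw)
qed

lemma oproj_orth: assumes P: "is_oproj n V P" and x: "x \<in> carrier_vec n" and v: "v \<in> V"
  shows "cinner v (x - P *\<^sub>v x) = 0"
proof -
  have Pc: "P \<in> carrier_mat n n" and aP: "adj P = P" using P by (auto simp: is_oproj_def)
  have vc: "v \<in> carrier_vec n" using oproj_subset[OF P] v by blast
  have "cinner v (P *\<^sub>v x) = cinner (P *\<^sub>v v) x" using cinner_herm[OF Pc aP vc x] .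
  thus ?thesis using oproj_fix[OF P v] x vc Pc by (simp add: cinner_minus_right[of _ n])
qed

lemma oproj_unique_vec: assumes P: "is_oproj n V P" and x: "x \<in> carrier_vec n" and y: "y \<in> V"
  and orth: "\<And>v. v \<in> V \<Longrightarrow> cinner v (x - y) = 0"
  shows "P *\<^sub>v x = y"
proof -
  have Pc: "P \<in> carrier_mat n n" and aP: "adj P = P" using P by (auto simp: is_oproj_def)
  have yc: "y \<in> carrier_vec n" using oproj_subset[OF P] y by blast
  define d where "d = x - y"
  have dc: "d \<in> carrier_vec n" using x yc by (simp add: d_def)
  have Pdc: "P *\<^sub>v d \<in> carrier_vec n" using Pc dc by simp
  have "cinner (P *\<^sub>v d) (P *\<^sub>v d) = cinner d (P *\<^sub>v (P *\<^sub>v d))"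
    using cinner_herm[OF Pc aP dc Pdc] by simp
  also have "\<dots> = cnj (cinner (P *\<^sub>v d) d)"
    using oproj_fix[OF P oproj_in[OF P dc]] cinner_cnj[OF Pdc dc] by simp
  also have "\<dots> = 0" using orth[OF oproj_in[OF P dc]] by (simp add: d_def)
  finally have "P *\<^sub>v d = 0\<^sub>v n" using cinner_self_zero[OF Pdc] by blast
  moreover have "P *\<^sub>v d = P *\<^sub>v x - y"
    using Pc x yc oproj_fix[OF P y] by (simp add: d_def mult_minus_distrib_mat_vec)
  ultimately show ?thesis using vec_diff_zero_iff[of "P *\<^sub>v x" n y] Pc x yc by simp
qed

lemma oproj_unique: assumes P: "is_oproj n V P" and Q: "is_oproj n V Q" shows "P = Q"
proof (rule mat_eq_by_vec[of _ n])
  fix x :: "complex vec" assume x: "x \<in> carrier_vec n"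
  show "P *\<^sub>v x = Q *\<^sub>v x"
    by (rule oproj_unique_vec[OF P x oproj_in[OF Q x] oproj_orth[OF Q x]])
qed (use P Q in \<open>auto simp: is_oproj_def\<close>)

lemma proj_oproj: assumes V: "csubspace n V" shows "is_oproj n V (proj n V)"
proof -
  obtain m u where "orthonormal n V m u" "ocomplete n V m u" using onb_exists[OF V] by blast
  hence P: "is_oproj n V (basis_proj n m u)" using basis_proj_oproj[OF V] by blast
  show ?thesis unfolding proj_def by (rule theI[of _ "basis_proj n m u"]) (use P oproj_unique in auto)
qed

lemma proj_eq: "csubspace n V \<Longrightarrow> is_oproj n V P \<Longrightarrow> proj n V = P"
  using proj_oproj oproj_unique by blast

lemma proj_carrier[simp]: "csubspace n V \<Longrightarrow> proj n V \<in> carrier_mat n n"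
  using proj_oproj by (auto simp: is_oproj_def)

lemma proj_herm: "csubspace n V \<Longrightarrow> adj (proj n V) = proj n V"
  using proj_oproj by (auto simp: is_oproj_def)

lemma proj_idem: "csubspace n V \<Longrightarrow> proj n V * proj n V = proj n V"
  using proj_oproj by (auto simp: is_oproj_def)

lemma proj_in: "csubspace n V \<Longrightarrow> x \<in> carrier_vec n \<Longrightarrow> proj n V *\<^sub>v x \<in> V"
  using proj_oproj oproj_in by blast

lemma proj_fix: "csubspace n V \<Longrightarrow> v \<in> V \<Longrightarrow> proj n V *\<^sub>v v = v"
  using proj_oproj oproj_fix by blast

lemma proj_orth: "csubspace n V \<Longrightarrow> x \<in> carrier_vec n \<Longrightarrow> v \<in> V \<Longrightarrow> cinner v (x - proj n V *\<^sub>v x) = 0"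
  using proj_oproj oproj_orth by blast

lemma proj_basis: "csubspace n V \<Longrightarrow> orthonormal n V m u \<Longrightarrow> ocomplete n V m u \<Longrightarrow>
  proj n V = basis_proj n m u"
  using proj_eq basis_proj_oproj by blast

lemma proj_osum: assumes A: "csubspace n A" and B: "csubspace n B"
  and AB: "\<And>a b. a \<in> A \<Longrightarrow> b \<in> B \<Longrightarrow> cinner a b = 0" and x: "x \<in> carrier_vec n"
  shows "proj n (osum A B) *\<^sub>v x = proj n A *\<^sub>v x + proj n B *\<^sub>v x"
proof (rule oproj_unique_vec[OF proj_oproj[OF csubspace_osum[OF A B]] x])
  let ?a = "proj n A *\<^sub>v x" and ?b = "proj n B *\<^sub>v x"
  have aA: "?a \<in> A" and bB: "?b \<in> B" using proj_in A B x by blast+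
  have ac: "?a \<in> carrier_vec n" and bc: "?b \<in> carrier_vec n" using A B x by simp_all
  show "?a + ?b \<in> osum A B" unfolding osum_def using aA bB by blast
  fix v assume "v \<in> osum A B"
  then obtain a b where ab: "a \<in> A" "b \<in> B" "v = a + b" unfolding osum_def by blast
  have cc: "a \<in> carrier_vec n" "b \<in> carrier_vec n" using ab A B csubspace_carrier by blast+
  have e: "x - (?a + ?b) = (x - ?a) - ?b" "x - (?a + ?b) = (x - ?b) - ?a"
    using x proj_carrier[OF A] proj_carrier[OF B] by (intro eq_vecI; simp)+
  have ba: "cinner b ?a = 0" using AB[OF aA ab(2)] cinner_cnj[OF ac cc(2)] by simp
  have "cinner a (x - (?a + ?b)) = 0"
    unfolding e(1) using x ac bc cc AB[OF ab(1) bB] proj_orth[OF A x ab(1)]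
    by (simp add: cinner_minus_right[of _ n])
  moreover have "cinner b (x - (?a + ?b)) = 0"
    unfolding e(2) using x ac bc cc ba proj_orth[OF B x ab(2)]
    by (simp add: cinner_minus_right[of _ n])
  ultimately show "cinner v (x - (?a + ?b)) = 0"
    using ab cc by (simp add: cinner_add_left[of _ n])
qed

lemma herm_idem_norm_le:
  assumes Q: "Q \<in> carrier_mat n n" and aQ: "adj Q = Q" and QQ: "Q * Q = Q" and x: "x \<in> carrier_vec n"
  shows "Re (cinner (Q *\<^sub>v x) (Q *\<^sub>v x)) \<le> Re (cinner x x)"
proof -
  let ?p = "Q *\<^sub>v x" and ?z = "x - Q *\<^sub>v x"
  have pc: "?p \<in> carrier_vec n" and zc: "?z \<in> carrier_vec n" using Q x by simp_all
  have QQx: "Q *\<^sub>v ?p = ?p" using QQ Q x by (metis assoc_mult_mat_vec)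
  have pz: "cinner ?p ?z = 0"
    using cinner_herm[OF Q aQ pc x] QQx x pc by (simp add: cinner_minus_right[of _ n])
  have zp: "cinner ?z ?p = 0" using pz cinner_cnj[OF pc zc] by simp
  have xe: "x = ?p + ?z" using x Q by (intro eq_vecI) auto
  have "cinner x x = cinner ?p ?p + cinner ?z ?z"
    by (subst (1 2) xe) (use pc zc pz zp in \<open>simp add: cinner_add_left[of _ n] cinner_add_right[of _ n]\<close>)
  thus ?thesis using cinner_self_Re[of ?z] by simp
qed

section \<open>Spectral theorem on an invariant subspace\<close>

lemma lincomb_mult: assumes A: "A \<in> carrier_mat n n" and u: "\<And>j. j < m \<Longrightarrow> u j \<in> carrier_vec n"
  shows "A *\<^sub>v lincomb n m c u = lincomb n m c (\<lambda>j. A *\<^sub>v u j)"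
proof (rule eq_vecI)
  fix a assume "a < dim_vec (lincomb n m c (\<lambda>j. A *\<^sub>v u j))"
  hence a: "a < n" by simp
  have "(A *\<^sub>v lincomb n m c u) $ a = (\<Sum>b<n. A $$ (a,b) * (\<Sum>j<m. c j * u j $ b))"
    using A a by (simp add: scalar_prod_def lincomb_def atLeast0LessThan)
  also have "\<dots> = (\<Sum>j<m. \<Sum>b<n. A $$ (a,b) * (c j * u j $ b))"
    by (simp add: sum_distrib_left) (rule sum.swap)
  also have "\<dots> = lincomb n m c (\<lambda>j. A *\<^sub>v u j) $ a"
    using A a carrier_vecD[OF u]
    by (auto simp: lincomb_def scalar_prod_def atLeast0LessThan sum_distrib_left mult_ac intro!: sum.cong)
  finally show "(A *\<^sub>v lincomb n m c u) $ a = lincomb n m c (\<lambda>j. A *\<^sub>v u j) $ a" .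
qed (use A in simp)

text \<open>An operator leaving a non-zero subspace \<open>W\<close> invariant has an eigenvector in \<open>W\<close>: apply the
  fundamental theorem of algebra (non-emptiness of the spectrum) to its matrix in an orthonormal
  basis of \<open>W\<close>.\<close>

lemma eigvec_in_invariant:
  assumes A: "A \<in> carrier_mat n n" and W: "csubspace n W" and inv: "\<And>w. w \<in> W \<Longrightarrow> A *\<^sub>v w \<in> W"
    and z: "z \<in> W" "z \<noteq> 0\<^sub>v n"
  shows "\<exists>x l. x \<in> W \<and> x \<noteq> 0\<^sub>v n \<and> A *\<^sub>v x = l \<cdot>\<^sub>v x"
proof -
  obtain p v where o: "orthonormal n W p v" and c: "ocomplete n W p v" using onb_exists[OF W] by blast
  have vc: "\<And>j. j < p \<Longrightarrow> v j \<in> carrier_vec n" using ortho_carrier[OF o] .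
  have p: "p > 0" using c z unfolding ocomplete_def by (cases p) auto
  define B where "B = mat p p (\<lambda>(j,k). cinner (v j) (A *\<^sub>v v k))"
  have Bc: "B \<in> carrier_mat p p" by (simp add: B_def)
  obtain l where "l \<in> spectrum B" using spectrum_non_empty[OF Bc p] by blast
  then obtain c where cc: "c \<in> carrier_vec p" and c0: "c \<noteq> 0\<^sub>v p" and Bcl: "B *\<^sub>v c = l \<cdot>\<^sub>v c"
    unfolding spectrum_def eigenvalue_def eigenvector_def using Bc by auto
  define x where "x = lincomb n p (\<lambda>k. c $ k) v"
  have xW: "x \<in> W" unfolding x_def by (rule lincomb_in[OF W ortho_in[OF o]])
  have Avk: "A *\<^sub>v v k = lincomb n p (\<lambda>j. B $$ (j,k)) v" if k: "k < p" for k
  proof -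
    have "A *\<^sub>v v k \<in> W" using inv ortho_in[OF o k] by blast
    hence "A *\<^sub>v v k = lincomb n p (\<lambda>j. cinner (v j) (A *\<^sub>v v k)) v" using c unfolding ocomplete_def by blast
    also have "\<dots> = lincomb n p (\<lambda>j. B $$ (j,k)) v" by (rule lincomb_cong) (simp add: B_def k)
    finally show ?thesis .
  qed
  have Bj: "(\<Sum>k<p. B $$ (j,k) * c $ k) = l * c $ j" if j: "j < p" for j
  proof -
    have "(B *\<^sub>v c) $ j = l * c $ j" using Bcl j cc by simp
    thus ?thesis using j cc Bc by (simp add: scalar_prod_def atLeast0LessThan)
  qed
  have Ax: "A *\<^sub>v x = l \<cdot>\<^sub>v x"
  proof (rule eq_vecI)
    fix a assume "a < dim_vec (l \<cdot>\<^sub>v x)"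
    hence a: "a < n" by (simp add: x_def)
    have "(A *\<^sub>v x) $ a = lincomb n p (\<lambda>k. c $ k) (\<lambda>k. A *\<^sub>v v k) $ a"
      unfolding x_def by (subst lincomb_mult[OF A vc]) simp_all
    also have "\<dots> = (\<Sum>k<p. c $ k * (\<Sum>j<p. B $$ (j,k) * v j $ a))"
      using a Avk by (simp add: lincomb_def)
    also have "\<dots> = (\<Sum>j<p. (\<Sum>k<p. B $$ (j,k) * c $ k) * v j $ a)"
      by (simp add: sum_distrib_left sum_distrib_right mult_ac) (rule sum.swap)
    also have "\<dots> = (l \<cdot>\<^sub>v x) $ a" using a Bj by (simp add: x_def lincomb_def sum_distrib_left mult_ac)
    finally show "(A *\<^sub>v x) $ a = (l \<cdot>\<^sub>v x) $ a" .
  qed (use A in \<open>simp add: x_def\<close>)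
  have x0: "x \<noteq> 0\<^sub>v n"
  proof
    assume x0: "x = 0\<^sub>v n"
    have "c = 0\<^sub>v p"
    proof (rule eq_vecI)
      fix j assume "j < dim_vec (0\<^sub>v p :: complex vec)"
      hence j: "j < p" by simp
      have "c $ j = cinner (v j) x" unfolding x_def using cinner_lincomb_ortho[OF o j] by simp
      thus "c $ j = 0\<^sub>v p $ j" using j x0 vc[OF j] by (simp add: cinner_zero_right)
    qed (use cc in simp)
    thus False using c0 by simp
  qed
  show ?thesis using xW x0 Ax by blast
qed

lemma herm_eig_real:
  assumes A: "A \<in> carrier_mat n n" and h: "adj A = A" and x: "x \<in> carrier_vec n"
    and x0: "x \<noteq> 0\<^sub>v n" and Ax: "A *\<^sub>v x = l \<cdot>\<^sub>v x"
  shows "l = complex_of_real (Re l)"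
proof -
  have "l * cinner x x = cinner x (A *\<^sub>v x)" using x by (simp add: Ax cinner_smult_right[of _ n])
  also have "\<dots> = cinner (A *\<^sub>v x) x" using cinner_herm[OF A h x x] .
  also have "\<dots> = cnj l * cinner x x" using x by (simp add: Ax cinner_smult_left[of _ n])
  finally have "l * cinner x x = cnj l * cinner x x" .
  moreover have "cinner x x \<noteq> 0" using cinner_self_pos[OF x x0] by auto
  ultimately have "l = cnj l" by simp
  thus ?thesis by (simp add: complex_eq_iff)
qed

definition eigenbasis :: "nat \<Rightarrow> complex vec set \<Rightarrow> complex mat \<Rightarrow> nat \<Rightarrow> (nat \<Rightarrow> complex vec)
    \<Rightarrow> (nat \<Rightarrow> real) \<Rightarrow> bool" where
  "eigenbasis n V A m u e \<longleftrightarrow> orthonormal n V m u \<and> ocomplete n V m u \<and>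
     (\<forall>j<m. A *\<^sub>v u j = complex_of_real (e j) \<cdot>\<^sub>v u j)"

text \<open>Greedily add a normalised eigenvector from the orthogonal complement (in \<open>V\<close>) of the
  eigenvectors found so far; that complement is again invariant because \<open>A\<close> is Hermitian.\<close>

theorem spectral_theorem:
  assumes A: "A \<in> carrier_mat n n" and h: "adj A = A" and V: "csubspace n V"
    and inv: "\<And>v. v \<in> V \<Longrightarrow> A *\<^sub>v v \<in> V"
  shows "\<exists>m u e. eigenbasis n V A m u e"
proof -
  let ?good = "\<lambda>m u. \<forall>j<m. \<exists>e::real. A *\<^sub>v u j = complex_of_real e \<cdot>\<^sub>v u j"
  have "\<exists>m u. orthonormal n V m u \<and> ?good m u \<and> ocomplete n V m u"
  proof (rule orthonormal_greedy)
    fix m u assume o: "orthonormal n V m u" and g: "?good m u" and nc: "\<not> ocomplete n V m u"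
    have uc: "\<And>k. k < m \<Longrightarrow> u k \<in> carrier_vec n" using ortho_carrier[OF o] .
    define W where "W = ocompl_in V (u ` {..<m})"
    have W: "csubspace n W" unfolding W_def
      by (rule csubspace_ocompl[OF V]) (use uc in auto)
    have Wmem: "w \<in> W \<longleftrightarrow> w \<in> V \<and> (\<forall>k<m. cinner (u k) w = 0)" for w
      by (auto simp: W_def ocompl_in_def)
    obtain z where z: "z \<in> V" "z \<in> carrier_vec n" "cinner z z = 1" "\<forall>k<m. cinner (u k) z = 0"
      using incomplete_unit_vec[OF V o nc] by blast
    have zW: "z \<in> W" using z Wmem by blast
    have z0: "z \<noteq> 0\<^sub>v n" using z(3) by (auto simp: cinner_zero_left)
    have invW: "A *\<^sub>v w \<in> W" if w: "w \<in> W" for w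
    proof -
      have wV: "w \<in> V" and wc: "w \<in> carrier_vec n" using w Wmem V csubspace_carrier by blast+
      have "cinner (u k) (A *\<^sub>v w) = 0" if k: "k < m" for k
      proof -
        obtain e where e: "A *\<^sub>v u k = complex_of_real e \<cdot>\<^sub>v u k" using g k by blast
        have "cinner (u k) (A *\<^sub>v w) = cinner (A *\<^sub>v u k) w" using cinner_herm[OF A h uc[OF k] wc] .
        also have "\<dots> = cnj (complex_of_real e) * cinner (u k) w"
          unfolding e using uc[OF k] by (simp add: cinner_smult_left[of _ n])
        also have "\<dots> = 0" using w k Wmem by simp
        finally show ?thesis .
      qed
      thus ?thesis using inv[OF wV] Wmem by blast
    qed
    obtain x l where x: "x \<in> W" "x \<noteq> 0\<^sub>v n" "A *\<^sub>v x = l \<cdot>\<^sub>v x"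
      using eigvec_in_invariant[OF A W invW zW z0] by blast
    have xc: "x \<in> carrier_vec n" using x(1) W csubspace_carrier by blast
    obtain c where c: "cinner (c \<cdot>\<^sub>v x) (c \<cdot>\<^sub>v x) = 1" using normalize_vec[OF xc x(2)] by blast
    let ?x = "c \<cdot>\<^sub>v x"
    have xW': "?x \<in> W" using csubspace_smult[OF W x(1)] .
    have Ax': "A *\<^sub>v ?x = complex_of_real (Re l) \<cdot>\<^sub>v ?x"
      using A xc x(3) herm_eig_real[OF A h xc x(2,3)]
      by (simp add: mult_mat_vec smult_smult_assoc mult.commute)
    have "orthonormal n V (Suc m) (u(m := ?x))"
      using ortho_extend[OF o _ _ c] xW' Wmem xc by simp
    moreover have "?good (Suc m) (u(m := ?x))"
      using g Ax' by (auto simp: less_Suc_eq)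
    ultimately show "\<exists>u'. orthonormal n V (Suc m) u' \<and> ?good (Suc m) u'" by blast
  qed simp
  then obtain m u where mu: "orthonormal n V m u" "?good m u" "ocomplete n V m u" by blast
  define e where "e = (\<lambda>j. SOME e::real. A *\<^sub>v u j = complex_of_real e \<cdot>\<^sub>v u j)"
  have "\<forall>j<m. A *\<^sub>v u j = complex_of_real (e j) \<cdot>\<^sub>v u j"
    using mu(2) unfolding e_def by (metis (mono_tags, lifting) someI_ex)
  thus ?thesis using mu unfolding eigenbasis_def by blast
qed

text \<open>In an eigenbasis the eigenvalues on \<open>V\<close> are exactly the \<open>e\<^sub>j\<close>: an eigenvector for \<open>l\<close>
  has a non-zero coefficient at some \<open>u\<^sub>j\<close>, which forces \<open>l = e\<^sub>j\<close>.\<close>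

lemma eigenbasis_eigs_on:
  assumes A: "A \<in> carrier_mat n n" and h: "adj A = A" and V: "csubspace n V"
    and eb: "eigenbasis n V A m u e"
  shows "eigs_on V A = e ` {..<m}"
proof -
  have o: "orthonormal n V m u" and cpl: "ocomplete n V m u"
    and eig: "\<And>j. j < m \<Longrightarrow> A *\<^sub>v u j = complex_of_real (e j) \<cdot>\<^sub>v u j"
    using eb by (auto simp: eigenbasis_def)
  have "e j \<in> eigs_on V A" if j: "j < m" for j
    using ortho_in[OF o j] ortho_nonzero[OF o j] carrier_vecD[OF ortho_carrier[OF o j]] eig[OF j]
    unfolding eigs_on_def by auto
  moreover have "l \<in> e ` {..<m}" if "l \<in> eigs_on V A" for l
  proof -
    obtain v where v: "v \<in> V" "v \<noteq> 0\<^sub>v (dim_vec v)" and Av: "A *\<^sub>v v = complex_of_real l \<cdot>\<^sub>v v"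
      using \<open>l \<in> eigs_on V A\<close> unfolding eigs_on_def by blast
    have vc: "v \<in> carrier_vec n" using v(1) V csubspace_carrier by blast
    obtain j where j: "j < m" and cj: "cinner (u j) v \<noteq> 0"
    proof (rule ccontr)
      assume "\<not> thesis"
      hence "lincomb n m (\<lambda>j. cinner (u j) v) u = 0\<^sub>v n" using that by (intro lincomb_zero) blast
      thus False using cpl v vc unfolding ocomplete_def by auto
    qed
    have uj: "u j \<in> carrier_vec n" using ortho_carrier[OF o j] .
    have "complex_of_real l * cinner (u j) v = cinner (u j) (A *\<^sub>v v)"
      using Av uj vc by (simp add: cinner_smult_right[of _ n])
    also have "\<dots> = cinner (A *\<^sub>v u j) v" using cinner_herm[OF A h uj vc] .
    also have "\<dots> = complex_of_real (e j) * cinner (u j) v"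
      using eig[OF j] uj by (simp add: cinner_smult_left[of _ n])
    finally have "l = e j" using cj by simp
    thus ?thesis using j by blast
  qed
  ultimately show ?thesis by blast
qed

lemma eigenbasis_nonempty: "eigenbasis n V A m u e \<Longrightarrow> w \<in> V \<Longrightarrow> w \<noteq> 0\<^sub>v n \<Longrightarrow> 0 < m"
  by (cases m) (auto simp: eigenbasis_def ocomplete_def)

section \<open>Expectation values of a Hermitian operator in states supported on a subspace\<close>

lemma trace_basis_proj: assumes X: "X \<in> carrier_mat n n" and u: "\<And>j. j < m \<Longrightarrow> u j \<in> carrier_vec n"
  shows "mtrace (X * basis_proj n m u) = (\<Sum>j<m. cinner (u j) (X *\<^sub>v u j))"
proof -
  have "mtrace (X * basis_proj n m u) = (\<Sum>a<n. \<Sum>b<n. X $$ (a,b) * (\<Sum>j<m. u j $ b * cnj (u j $ a)))"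
    using X by (simp add: mtrace_def basis_proj_def scalar_prod_def atLeast0LessThan)
  also have "\<dots> = (\<Sum>a<n. \<Sum>j<m. \<Sum>b<n. X $$ (a,b) * (u j $ b * cnj (u j $ a)))"
    by (simp add: sum_distrib_left) (rule sum.cong[OF refl], rule sum.swap)
  also have "\<dots> = (\<Sum>j<m. \<Sum>a<n. \<Sum>b<n. X $$ (a,b) * (u j $ b * cnj (u j $ a)))"
    by (rule sum.swap)
  also have "\<dots> = (\<Sum>j<m. cinner (u j) (X *\<^sub>v u j))"
    using X carrier_vecD[OF u]
    by (auto simp: cinner_def scalar_prod_def atLeast0LessThan sum_distrib_left mult_ac intro!: sum.cong)
  finally show ?thesis .
qed

lemma eigenbasis_trace:
  assumes A: "A \<in> carrier_mat n n" and h: "adj A = A" and V: "csubspace n V"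
    and eb: "eigenbasis n V A m u e" and r: "\<rho> \<in> carrier_mat n n" and rP: "\<rho> * proj n V = \<rho>"
  shows "mtrace (A * \<rho>) = (\<Sum>j<m. complex_of_real (e j) * cinner (u j) (\<rho> *\<^sub>v u j))"
proof -
  have o: "orthonormal n V m u" and eig: "\<And>j. j < m \<Longrightarrow> A *\<^sub>v u j = complex_of_real (e j) \<cdot>\<^sub>v u j"
    using eb by (auto simp: eigenbasis_def)
  have uc: "\<And>j. j < m \<Longrightarrow> u j \<in> carrier_vec n" using ortho_carrier[OF o] .
  have P: "proj n V = basis_proj n m u" using proj_basis[OF V] eb by (simp add: eigenbasis_def)
  have "mtrace (A * \<rho>) = mtrace ((A * \<rho>) * basis_proj n m u)"
    using A r rP by (simp add: P assoc_mult_mat[of A n n \<rho> n _ n])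
  also have "\<dots> = (\<Sum>j<m. cinner (u j) (A *\<^sub>v (\<rho> *\<^sub>v u j)))"
    using A r uc by (simp add: trace_basis_proj)
  also have "\<dots> = (\<Sum>j<m. complex_of_real (e j) * cinner (u j) (\<rho> *\<^sub>v u j))"
    using cinner_herm[OF A h uc] eig uc r by (simp add: cinner_smult_left[of _ n])
  finally show ?thesis .
qed

lemma convex_comb_Min_Max:
  fixes e p :: "nat \<Rightarrow> real"
  assumes p: "\<And>j. j < m \<Longrightarrow> p j \<ge> 0" and p1: "(\<Sum>j<m. p j) = 1"
  shows "Min (e ` {..<m}) \<le> (\<Sum>j<m. e j * p j) \<and> (\<Sum>j<m. e j * p j) \<le> Max (e ` {..<m})"
proof -
  have fin: "finite (e ` {..<m})" by simp
  have "Min (e ` {..<m}) = (\<Sum>j<m. Min (e ` {..<m}) * p j)" using p1 by (simp add: sum_distrib_left[symmetric])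
  also have "\<dots> \<le> (\<Sum>j<m. e j * p j)" using p fin by (intro sum_mono mult_right_mono) auto
  finally have lo: "Min (e ` {..<m}) \<le> (\<Sum>j<m. e j * p j)" .
  have "(\<Sum>j<m. e j * p j) \<le> (\<Sum>j<m. Max (e ` {..<m}) * p j)" using p fin by (intro sum_mono mult_right_mono) auto
  also have "\<dots> = Max (e ` {..<m})" using p1 by (simp add: sum_distrib_left[symmetric])
  finally show ?thesis using lo by simp
qed

lemma supported_right: assumes V: "csubspace n V" and r: "\<rho> \<in> carrier_mat n n"
  and rP: "proj n V * \<rho> * proj n V = \<rho>"
  shows "\<rho> * proj n V = \<rho>"
proof -
  let ?P = "proj n V"
  have "\<rho> * ?P = ?P * \<rho> * (?P * ?P)" using rP V r by (metis assoc_mult_mat mult_carrier_nn proj_carrier)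
  thus ?thesis using proj_idem[OF V] rP by simp
qed

lemma expectation_bounds:
  assumes A: "A \<in> carrier_mat n n" and h: "adj A = A" and V: "csubspace n V"
    and eb: "eigenbasis n V A m u e" and d: "density n \<rho>" and rP: "proj n V * \<rho> * proj n V = \<rho>"
  shows "Im (mtrace (A * \<rho>)) = 0 \<and> Min (e ` {..<m}) \<le> Re (mtrace (A * \<rho>))
    \<and> Re (mtrace (A * \<rho>)) \<le> Max (e ` {..<m})"
proof -
  have r: "\<rho> \<in> carrier_mat n n" using d by (simp add: density_def psd_def)
  have o: "orthonormal n V m u" and cpl: "ocomplete n V m u" using eb by (auto simp: eigenbasis_def)
  have uc: "\<And>j. j < m \<Longrightarrow> u j \<in> carrier_vec n" using ortho_carrier[OF o] .
  define p where "p = (\<lambda>j. cinner (u j) (\<rho> *\<^sub>v u j))"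
  have pIm: "Im (p j) = 0" and pRe: "Re (p j) \<ge> 0" if "j < m" for j
    using d uc[OF that] by (auto simp: density_def psd_def p_def)
  have "(\<Sum>j<m. p j) = mtrace (\<rho> * proj n V)"
    unfolding p_def proj_basis[OF V o cpl] by (rule trace_basis_proj[of \<rho> n m u, OF r uc, symmetric])
  also have "\<dots> = 1" using d supported_right[OF V r rP] by (simp add: density_def)
  finally have "(\<Sum>j<m. p j) = 1" .
  hence "Re (\<Sum>j<m. p j) = 1" by simp
  hence p1: "(\<Sum>j<m. Re (p j)) = 1" by simp
  have tr: "mtrace (A * \<rho>) = (\<Sum>j<m. complex_of_real (e j) * p j)"
    unfolding p_def by (rule eigenbasis_trace[OF A h V eb r supported_right[OF V r rP]])
  have "Re (mtrace (A * \<rho>)) = (\<Sum>j<m. e j * Re (p j))" unfolding tr using pIm by simp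
  moreover have "Im (mtrace (A * \<rho>)) = 0" unfolding tr using pIm by simp
  ultimately show ?thesis using convex_comb_Min_Max[of m "\<lambda>j. Re (p j)" e] pRe p1 by simp
qed

definition pure_state :: "nat \<Rightarrow> complex vec \<Rightarrow> complex mat" where
  "pure_state n u = mat n n (\<lambda>(a,b). u $ a * cnj (u $ b))"

lemma pure_state_carrier[simp]: "pure_state n u \<in> carrier_mat n n"
  by (simp add: pure_state_def)

lemma pure_state_mult_vec: assumes u: "u \<in> carrier_vec n" and x: "x \<in> carrier_vec n"
  shows "pure_state n u *\<^sub>v x = cinner u x \<cdot>\<^sub>v u"
  by (intro eq_vecI)
    (use u x in \<open>auto simp: pure_state_def scalar_prod_def cinner_def sum_distrib_left mult_ac atLeast0LessThan\<close>)

lemma pure_state_density: assumes u: "u \<in> carrier_vec n" and uu: "cinner u u = 1"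
  shows "density n (pure_state n u)"
proof -
  have h: "adj (pure_state n u) = pure_state n u" by (intro eq_matI) (auto simp: pure_state_def mult.commute)
  have q: "Im (cinner v (pure_state n u *\<^sub>v v)) = 0 \<and> Re (cinner v (pure_state n u *\<^sub>v v)) \<ge> 0"
    if v: "v \<in> carrier_vec n" for v
  proof -
    have "cinner v (pure_state n u *\<^sub>v v) = cinner u v * cnj (cinner u v)"
      using u v cinner_cnj[OF u v] by (simp add: pure_state_mult_vec cinner_smult_right[of _ n])
    also have "\<dots> = complex_of_real ((cmod (cinner u v))^2)" by (simp only: complex_norm_square)
    finally show ?thesis by simp
  qed
  have "mtrace (pure_state n u) = cinner u u"
    using u by (simp add: mtrace_def pure_state_def cinner_carrier mult.commute)
  thus ?thesis unfolding density_def psd_def using h q uu by simp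
qed

lemma pure_state_supported: assumes V: "csubspace n V" and u: "u \<in> V"
  shows "proj n V * pure_state n u * proj n V = pure_state n u"
proof (rule mat_eq_by_vec[of _ n])
  let ?P = "proj n V" and ?r = "pure_state n u"
  fix x :: "complex vec" assume x: "x \<in> carrier_vec n"
  have Pc: "?P \<in> carrier_mat n n" using V by simp
  have uc: "u \<in> carrier_vec n" using V u csubspace_carrier by blast
  have Pu: "?P *\<^sub>v u = u" using proj_fix[OF V u] .
  have Px: "?P *\<^sub>v x \<in> carrier_vec n" using Pc x by simp
  have "(?P * ?r * ?P) *\<^sub>v x = ?P *\<^sub>v (?r *\<^sub>v (?P *\<^sub>v x))"
    using Pc x Px by (simp add: assoc_mult_mat_vec[of "?P * ?r" n n ?P n x] assoc_mult_mat_vec[of ?P n n ?r n])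
  also have "\<dots> = ?P *\<^sub>v (cinner u (?P *\<^sub>v x) \<cdot>\<^sub>v u)"
    using uc Px by (simp add: pure_state_mult_vec)
  also have "\<dots> = cinner u x \<cdot>\<^sub>v u"
    using Pc uc x Pu cinner_herm[OF Pc proj_herm[OF V] uc x] by (simp add: mult_mat_vec)
  finally show "(?P * ?r * ?P) *\<^sub>v x = ?r *\<^sub>v x" using uc x by (simp add: pure_state_mult_vec)
qed (use V in simp_all)

lemma expectation_attained:
  assumes A: "A \<in> carrier_mat n n" and h: "adj A = A" and V: "csubspace n V"
    and eb: "eigenbasis n V A m u e" and j: "j < m"
  shows "\<exists>\<rho>. density n \<rho> \<and> proj n V * \<rho> * proj n V = \<rho> \<and> mtrace (A * \<rho>) = complex_of_real (e j)"
proof (intro exI conjI)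
  let ?r = "pure_state n (u j)"
  have o: "orthonormal n V m u" using eb by (simp add: eigenbasis_def)
  have uc: "\<And>k. k < m \<Longrightarrow> u k \<in> carrier_vec n" using ortho_carrier[OF o] .
  show d: "density n ?r" using pure_state_density[OF uc[OF j]] ortho_inner[OF o j j] by simp
  show rP: "proj n V * ?r * proj n V = ?r" using pure_state_supported[OF V ortho_in[OF o j]] .
  have "cinner (u k) (?r *\<^sub>v u k) = (if k = j then 1 else 0)" if k: "k < m" for k
  proof -
    have "cinner (u k) (?r *\<^sub>v u k) = cinner (u j) (u k) * cinner (u k) (u j)"
      using uc[OF j] uc[OF k] by (simp add: pure_state_mult_vec cinner_smult_right[of _ n])
    thus ?thesis using ortho_inner[OF o] j k by auto
  qed
  hence "mtrace (A * ?r) = (\<Sum>k<m. complex_of_real (e k) * (if k = j then 1 else 0))"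
    using eigenbasis_trace[OF A h V eb pure_state_carrier supported_right[OF V pure_state_carrier rP]]
    by simp
  also have "\<dots> = complex_of_real (e j)" using j by (simp add: if_distrib cong: if_cong)
  finally show "mtrace (A * ?r) = complex_of_real (e j)" .
qed

theorem hermitian_expectation_range:
  assumes A: "A \<in> carrier_mat n n" and h: "adj A = A" and V: "csubspace n V"
    and inv: "\<forall>v\<in>V. A *\<^sub>v v \<in> V" and w: "w \<in> V" "w \<noteq> 0\<^sub>v n"
  shows "finite (eigs_on V A)" and "eigs_on V A \<noteq> {}"
    and "\<And>\<rho>. density n \<rho> \<Longrightarrow> proj n V * \<rho> * proj n V = \<rho> \<Longrightarrow>
      Im (mtrace (A * \<rho>)) = 0 \<and> Min (eigs_on V A) \<le> Re (mtrace (A * \<rho>))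
      \<and> Re (mtrace (A * \<rho>)) \<le> Max (eigs_on V A)"
    and "\<exists>\<rho>. density n \<rho> \<and> proj n V * \<rho> * proj n V = \<rho> \<and> mtrace (A * \<rho>) = complex_of_real (Min (eigs_on V A))"
    and "\<exists>\<rho>. density n \<rho> \<and> proj n V * \<rho> * proj n V = \<rho> \<and> mtrace (A * \<rho>) = complex_of_real (Max (eigs_on V A))"
proof -
  have "\<And>v. v \<in> V \<Longrightarrow> A *\<^sub>v v \<in> V" using inv by blast
  then obtain m u e where eb: "eigenbasis n V A m u e" using spectral_theorem[OF A h V] by blast
  have eigs: "eigs_on V A = e ` {..<m}" by (rule eigenbasis_eigs_on[OF A h V eb])
  have m: "0 < m" by (rule eigenbasis_nonempty[OF eb w])
  show fin: "finite (eigs_on V A)" and ne: "eigs_on V A \<noteq> {}" using m by (auto simp: eigs)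
  show "Im (mtrace (A * \<rho>)) = 0 \<and> Min (eigs_on V A) \<le> Re (mtrace (A * \<rho>))
      \<and> Re (mtrace (A * \<rho>)) \<le> Max (eigs_on V A)"
    if "density n \<rho>" "proj n V * \<rho> * proj n V = \<rho>" for \<rho>
    unfolding eigs by (rule expectation_bounds[OF A h V eb that])
  have attained: "\<exists>\<rho>. density n \<rho> \<and> proj n V * \<rho> * proj n V = \<rho> \<and> mtrace (A * \<rho>) = complex_of_real l"
    if "l \<in> eigs_on V A" for l
    using that expectation_attained[OF A h V eb] unfolding eigs by blast
  show "\<exists>\<rho>. density n \<rho> \<and> proj n V * \<rho> * proj n V = \<rho> \<and> mtrace (A * \<rho>) = complex_of_real (Min (eigs_on V A))"
    by (rule attained[OF Min_in[OF fin ne]])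
  show "\<exists>\<rho>. density n \<rho> \<and> proj n V * \<rho> * proj n V = \<rho> \<and> mtrace (A * \<rho>) = complex_of_real (Max (eigs_on V A))"
    by (rule attained[OF Max_in[OF fin ne]])
qed

lemma eigs_on_le_one:
  assumes contr: "\<And>v. v \<in> V \<Longrightarrow> Re (cinner v (A *\<^sub>v v)) \<le> Re (cinner v v)" and l: "l \<in> eigs_on V A"
  shows "l \<le> 1"
proof -
  obtain v where v: "v \<in> V" "v \<noteq> 0\<^sub>v (dim_vec v)" and Av: "A *\<^sub>v v = complex_of_real l \<cdot>\<^sub>v v"
    using l unfolding eigs_on_def by blast
  have vc: "v \<in> carrier_vec (dim_vec v)" by simp
  have "l * Re (cinner v v) = Re (cinner v (A *\<^sub>v v))"
    using Av by (simp add: cinner_smult_right[OF vc vc])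
  also have "\<dots> \<le> 1 * Re (cinner v v)" using contr[OF v(1)] by simp
  finally show ?thesis using cinner_self_pos[OF vc v(2)] by simp
qed

section \<open>Compressions of a Kraus map\<close>

text \<open>For orthogonal projections \<open>Q\<close>, \<open>P\<close> the compression \<open>\<Sum>\<^sub>k (Q M\<^sub>k P)\<^sup>\<dagger> (Q M\<^sub>k P)\<close> is the operator
  \<open>G\<close> with \<open>tr (Q T(\<rho>)) = tr (G \<rho>)\<close> for states \<open>\<rho>\<close> supported on the range of \<open>P\<close>.\<close>

definition compression :: "nat \<Rightarrow> complex mat list \<Rightarrow> complex mat \<Rightarrow> complex mat \<Rightarrow> complex mat" where
  "compression n Ms Q P = msum n (\<lambda>M. adj (Q * M * P) * (Q * M * P)) Ms"

lemma kraus_map_msum: "kraus_map n Ms \<rho> = msum n (\<lambda>M. M * \<rho> * adj M) Ms"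
  by (simp add: kraus_map_def msum_def)

lemma kraus_norm: assumes K: "is_kraus n Ms" and w: "w \<in> carrier_vec n"
  shows "(\<Sum>M\<leftarrow>Ms. cinner (M *\<^sub>v w) (M *\<^sub>v w)) = cinner w w"
proof -
  have Ms: "\<And>M. M \<in> set Ms \<Longrightarrow> M \<in> carrier_mat n n" using K by (simp add: is_kraus_def)
  have "(\<Sum>M\<leftarrow>Ms. cinner (M *\<^sub>v w) (M *\<^sub>v w)) = (\<Sum>M\<leftarrow>Ms. cinner w ((adj M * M) *\<^sub>v w))"
    by (rule sum_list_cong) (metis cinner_adj_mult Ms w)
  also have "\<dots> = cinner w (msum n (\<lambda>M. adj M * M) Ms *\<^sub>v w)"
    using Ms w by (simp add: msum_quadratic)
  also have "msum n (\<lambda>M. adj M * M) Ms = 1\<^sub>m n" using K by (simp add: is_kraus_def msum_def)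
  finally show ?thesis using w by simp
qed

lemma trace_compressed_term:
  fixes Q P M \<rho> :: "complex mat"
  assumes Q: "Q \<in> carrier_mat n n" and P: "P \<in> carrier_mat n n" and M: "M \<in> carrier_mat n n"
    and r: "\<rho> \<in> carrier_mat n n" and QQ: "Q * Q = Q" and aQ: "adj Q = Q" and aP: "adj P = P"
    and rP: "P * \<rho> * P = \<rho>"
  shows "mtrace (Q * (M * \<rho> * adj M)) = mtrace (adj (Q * M * P) * (Q * M * P) * \<rho>)"
proof -
  let ?X = "M * \<rho> * adj M" and ?N = "Q * M * P"
  have X: "?X \<in> carrier_mat n n" and N: "?N \<in> carrier_mat n n" using Q M P r by simp_all
  have aN: "adj ?N = P * adj M * Q" using Q M P aQ aP by (simp add: adj_mult[of _ n n _ n])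
  have aNc: "adj ?N \<in> carrier_mat n n" and NRc: "?N * \<rho> \<in> carrier_mat n n" using N r by simp_all
  have "mtrace (Q * ?X) = mtrace ((Q * Q) * ?X)" using QQ by simp
  also have "\<dots> = mtrace (Q * (Q * ?X))" using Q X by simp
  also have "\<dots> = mtrace ((Q * ?X) * Q)" using Q X by (intro mtrace_comm[of _ n n]) auto
  also have "(Q * ?X) * Q = Q * (M * (P * \<rho> * P) * adj M) * Q" using rP by simp
  also have "\<dots> = ?N * \<rho> * adj ?N" unfolding aN using Q M P r by (simp add: assoc_mult_mat[of _ n n _ n _ n])
  also have "mtrace (?N * \<rho> * adj ?N) = mtrace (adj ?N * (?N * \<rho>))" by (rule mtrace_comm[OF NRc aNc])
  also have "adj ?N * (?N * \<rho>) = adj ?N * ?N * \<rho>" using assoc_mult_mat[OF aNc N r] by simp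
  finally show ?thesis .
qed

context
  fixes n :: nat and Ms :: "complex mat list" and P Q :: "complex mat"
  assumes Ms_carrier: "set Ms \<subseteq> carrier_mat n n"
    and P: "P \<in> carrier_mat n n" and aP: "adj P = P" and PP: "P * P = P"
    and Q: "Q \<in> carrier_mat n n" and aQ: "adj Q = Q" and QQ: "Q * Q = Q"
begin

private lemma Ms: "M \<in> set Ms \<Longrightarrow> M \<in> carrier_mat n n"
  using Ms_carrier by blast

private lemma compressed_carrier: "M \<in> set Ms \<Longrightarrow> Q * M * P \<in> carrier_mat n n"
  using Ms P Q by simp

private lemma compressed_term_carrier: "M \<in> set Ms \<Longrightarrow> adj (Q * M * P) * (Q * M * P) \<in> carrier_mat n n"
  using compressed_carrier by simp

lemma compression_carrier: "compression n Ms Q P \<in> carrier_mat n n"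
  unfolding compression_def by (rule msum_carrier[OF compressed_term_carrier])

lemma compression_herm: "adj (compression n Ms Q P) = compression n Ms Q P"
proof -
  have "adj (compression n Ms Q P) = msum n (\<lambda>M. adj (adj (Q * M * P) * (Q * M * P))) Ms"
    unfolding compression_def by (rule msum_adj) (rule compressed_term_carrier)
  also have "\<dots> = compression n Ms Q P"
    unfolding compression_def by (rule msum_cong) (simp add: adj_mult[of _ n n _ n] compressed_carrier)
  finally show ?thesis .
qed

private lemma compressed_mult_vec: assumes M: "M \<in> set Ms" and v: "v \<in> carrier_vec n"
  shows "Q * M * P *\<^sub>v v = Q *\<^sub>v (M *\<^sub>v (P *\<^sub>v v))"
  using assoc_mult_mat_vec[OF mult_carrier_nn[OF Q Ms[OF M]] P v]
    assoc_mult_mat_vec[OF Q Ms[OF M] mult_vec_carrier_nn[OF P v]] by simp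

lemma compression_quadratic: assumes v: "v \<in> carrier_vec n"
  shows "cinner v (compression n Ms Q P *\<^sub>v v)
    = (\<Sum>M\<leftarrow>Ms. cinner (Q *\<^sub>v (M *\<^sub>v (P *\<^sub>v v))) (Q *\<^sub>v (M *\<^sub>v (P *\<^sub>v v))))"
proof -
  have "cinner v (compression n Ms Q P *\<^sub>v v) = (\<Sum>M\<leftarrow>Ms. cinner v ((adj (Q * M * P) * (Q * M * P)) *\<^sub>v v))"
    unfolding compression_def by (rule msum_quadratic[OF v compressed_term_carrier])
  also have "\<dots> = (\<Sum>M\<leftarrow>Ms. cinner (Q *\<^sub>v (M *\<^sub>v (P *\<^sub>v v))) (Q *\<^sub>v (M *\<^sub>v (P *\<^sub>v v))))"
    by (rule sum_list_cong) (simp add: cinner_adj_mult[OF compressed_carrier v] compressed_mult_vec v)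
  finally show ?thesis .
qed

lemma compression_range: "P * compression n Ms Q P = compression n Ms Q P"
proof -
  have PN: "P * adj (Q * M * P) = adj (Q * M * P)" if M: "M \<in> set Ms" for M
  proof -
    have "Q * M * P * P = Q * M * P"
      using assoc_mult_mat[OF mult_carrier_nn[OF Q Ms[OF M]] P P] PP by simp
    hence "adj (Q * M * P * P) = adj (Q * M * P)" by simp
    thus ?thesis using compressed_carrier[OF M] P aP by (simp add: adj_mult[of _ n n P n])
  qed
  have "P * compression n Ms Q P = msum n (\<lambda>M. P * (adj (Q * M * P) * (Q * M * P))) Ms"
    unfolding compression_def by (rule msum_mult_left[OF P]) (rule compressed_term_carrier)
  also have "\<dots> = compression n Ms Q P"
    unfolding compression_def
  proof (rule msum_cong)
    fix M assume M: "M \<in> set Ms"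
    have N: "Q * M * P \<in> carrier_mat n n" using compressed_carrier[OF M] .
    show "P * (adj (Q * M * P) * (Q * M * P)) = adj (Q * M * P) * (Q * M * P)"
      using assoc_mult_mat[OF P adj_carrier[OF N] N] PN[OF M] by simp
  qed
  finally show ?thesis .
qed

lemma compression_trace: assumes r: "\<rho> \<in> carrier_mat n n" and rP: "P * \<rho> * P = \<rho>"
  shows "mtrace (Q * kraus_map n Ms \<rho>) = mtrace (compression n Ms Q P * \<rho>)"
proof -
  have "mtrace (Q * kraus_map n Ms \<rho>) = (\<Sum>M\<leftarrow>Ms. mtrace (Q * (M * \<rho> * adj M)))"
    unfolding kraus_map_msum using Ms r Q by (simp add: msum_mult_left msum_trace)
  also have "\<dots> = (\<Sum>M\<leftarrow>Ms. mtrace (adj (Q * M * P) * (Q * M * P) * \<rho>))"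
    using trace_compressed_term[OF Q P Ms r QQ aQ aP rP] by (simp cong: map_cong)
  also have "\<dots> = mtrace (compression n Ms Q P * \<rho>)"
    unfolding compression_def using r compressed_term_carrier
    by (simp add: msum_mult_right msum_trace)
  finally show ?thesis .
qed

lemma compression_contraction: assumes K: "is_kraus n Ms" and v: "v \<in> carrier_vec n"
  shows "Re (cinner v (compression n Ms Q P *\<^sub>v v)) \<le> Re (cinner v v)"
proof -
  have Pv: "P *\<^sub>v v \<in> carrier_vec n" using P v by simp
  have "Re (cinner v (compression n Ms Q P *\<^sub>v v)) = (\<Sum>M\<leftarrow>Ms. Re (cinner (Q *\<^sub>v (M *\<^sub>v (P *\<^sub>v v))) (Q *\<^sub>v (M *\<^sub>v (P *\<^sub>v v)))))"
    using compression_quadratic[OF v] by (simp add: Re_sum_list)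
  also have "\<dots> \<le> (\<Sum>M\<leftarrow>Ms. Re (cinner (M *\<^sub>v (P *\<^sub>v v)) (M *\<^sub>v (P *\<^sub>v v))))"
    using herm_idem_norm_le[OF Q aQ QQ] Ms Pv by (intro sum_list_mono) simp
  also have "\<dots> = Re (cinner (P *\<^sub>v v) (P *\<^sub>v v))"
    using kraus_norm[OF K Pv] by (simp add: Re_sum_list[symmetric])
  also have "\<dots> \<le> Re (cinner v v)" by (rule herm_idem_norm_le[OF P aP PP v])
  finally show ?thesis .
qed

end

section \<open>The DID construction\<close>

lemma did_SR_Suc: "did_SR n Ms S (Suc k) =
   (osum (fst (did_SR n Ms S k)) (ocompl_in (snd (did_SR n Ms S k))
      {v \<in> snd (did_SR n Ms S k). \<forall>M\<in>set Ms. proj n (fst (did_SR n Ms S k)) *\<^sub>v (M *\<^sub>v v) = 0\<^sub>v n}),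
    {v \<in> snd (did_SR n Ms S k). \<forall>M\<in>set Ms. proj n (fst (did_SR n Ms S k)) *\<^sub>v (M *\<^sub>v v) = 0\<^sub>v n})"
  by (simp add: Let_def)

lemma kernel_csubspace: assumes R: "csubspace n R" and Si: "csubspace n Si"
  and Ms: "\<And>M. M \<in> set Ms \<Longrightarrow> M \<in> carrier_mat n n"
  shows "csubspace n {v \<in> R. \<forall>M\<in>set Ms. proj n Si *\<^sub>v (M *\<^sub>v v) = 0\<^sub>v n}"
  unfolding csubspace_def
proof (intro conjI ballI allI)
  let ?K = "{v \<in> R. \<forall>M\<in>set Ms. proj n Si *\<^sub>v (M *\<^sub>v v) = 0\<^sub>v n}"
  have Pc: "proj n Si \<in> carrier_mat n n" using Si by simp
  show "?K \<subseteq> carrier_vec n" using R csubspace_carrier by blast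
  show "0\<^sub>v n \<in> ?K" using csubspace_zero[OF R] Ms Pc by simp
  fix u w assume u: "u \<in> ?K" and w: "w \<in> ?K"
  have uc: "u \<in> carrier_vec n" and wc: "w \<in> carrier_vec n" using u w R csubspace_carrier by blast+
  have "proj n Si *\<^sub>v (M *\<^sub>v (u + w)) = 0\<^sub>v n" if M: "M \<in> set Ms" for M
    using u w M Ms[OF M] uc wc Pc by (simp add: mult_add_distrib_mat_vec[of _ n n])
  thus "u + w \<in> ?K" using csubspace_add[OF R] u w by blast
next
  let ?K = "{v \<in> R. \<forall>M\<in>set Ms. proj n Si *\<^sub>v (M *\<^sub>v v) = 0\<^sub>v n}"
  fix c :: complex and w assume w: "w \<in> ?K"
  have wc: "w \<in> carrier_vec n" using w R csubspace_carrier by blast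
  have "proj n Si *\<^sub>v (M *\<^sub>v (c \<cdot>\<^sub>v w)) = 0\<^sub>v n" if M: "M \<in> set Ms" for M
  proof -
    have "proj n Si *\<^sub>v (M *\<^sub>v (c \<cdot>\<^sub>v w)) = c \<cdot>\<^sub>v (proj n Si *\<^sub>v (M *\<^sub>v w))"
      using Ms[OF M] wc Si by (simp add: mult_mat_vec[of _ n n])
    moreover have "c \<cdot>\<^sub>v 0\<^sub>v n = (0\<^sub>v n :: complex vec)" by (intro eq_vecI) auto
    ultimately show ?thesis using w M by simp
  qed
  thus "c \<cdot>\<^sub>v w \<in> ?K" using csubspace_smult[OF R] w by blast
qed

lemma did_SR_invariant: assumes S: "csubspace n S" and Ms: "\<And>M. M \<in> set Ms \<Longrightarrow> M \<in> carrier_mat n n"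
  shows "csubspace n (fst (did_SR n Ms S k)) \<and> csubspace n (snd (did_SR n Ms S k)) \<and>
    (\<forall>s\<in>fst (did_SR n Ms S k). \<forall>r\<in>snd (did_SR n Ms S k). cinner s r = 0)"
proof (induction k)
  case 0
  have "csubspace n (ocompl_in (carrier_vec n) S)"
    by (rule csubspace_ocompl[OF csubspace_carrier_vec]) (use S csubspace_carrier in blast)
  thus ?case using S by (auto simp: ocompl_in_def)
next
  case (Suc k)
  let ?S = "fst (did_SR n Ms S k)" and ?R = "snd (did_SR n Ms S k)"
  let ?Rn = "{v \<in> ?R. \<forall>M\<in>set Ms. proj n ?S *\<^sub>v (M *\<^sub>v v) = 0\<^sub>v n}"
  have Sk: "csubspace n ?S" and Rk: "csubspace n ?R" and orth: "\<forall>s\<in>?S. \<forall>r\<in>?R. cinner s r = 0"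
    using Suc by auto
  have Rn: "csubspace n ?Rn" by (rule kernel_csubspace[OF Rk Sk Ms])
  have T: "csubspace n (ocompl_in ?R ?Rn)"
    by (rule csubspace_ocompl[OF Rk]) (use Rn csubspace_carrier in blast)
  have o: "cinner x r = 0" if x: "x \<in> osum ?S (ocompl_in ?R ?Rn)" and r: "r \<in> ?Rn" for x r
  proof -
    obtain s t where st: "s \<in> ?S" "t \<in> ocompl_in ?R ?Rn" "x = s + t" using x unfolding osum_def by blast
    have sc: "s \<in> carrier_vec n" and tc: "t \<in> carrier_vec n" and rc: "r \<in> carrier_vec n"
      using st Sk T Rn r csubspace_carrier by blast+
    have "cinner s r = 0" using orth st r by auto
    moreover have "cinner r t = 0" using st r by (auto simp: ocompl_in_def)
    hence "cinner t r = 0" using cinner_cnj[OF rc tc] by simp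
    ultimately show ?thesis using st sc tc by (simp add: cinner_add_left[of _ n])
  qed
  show ?case unfolding did_SR_Suc using csubspace_osum[OF Sk T] Rn o by simp
qed

lemma did_G_compression:
  "did_G n Ms S i = compression n Ms (proj n (did_T n Ms S (i - 1))) (proj n (did_T n Ms S i))"
  by (simp add: did_G_def compression_def msum_def)

context
  fixes n :: nat and Ms :: "complex mat list" and S :: "complex vec set"
  assumes S: "csubspace n S" and Ms_carrier: "set Ms \<subseteq> carrier_mat n n"
begin

private lemma Ms_mem: "M \<in> set Ms \<Longrightarrow> M \<in> carrier_mat n n"
  using Ms_carrier by blast

abbreviation "SS k \<equiv> fst (did_SR n Ms S k)"
abbreviation "RR k \<equiv> snd (did_SR n Ms S k)"

lemma SS_csubspace: "csubspace n (SS k)" using did_SR_invariant[OF S Ms_mem] by blast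
lemma RR_csubspace: "csubspace n (RR k)" using did_SR_invariant[OF S Ms_mem] by blast
lemma SS_RR_orth: "s \<in> SS k \<Longrightarrow> r \<in> RR k \<Longrightarrow> cinner s r = 0" using did_SR_invariant[OF S Ms_mem] by blast

lemma RR_Suc: "RR (Suc k) = {v \<in> RR k. \<forall>M\<in>set Ms. proj n (SS k) *\<^sub>v (M *\<^sub>v v) = 0\<^sub>v n}"
  by (simp add: Let_def)

lemma did_T_Suc_mem: "v \<in> did_T n Ms S (Suc k) \<longleftrightarrow> v \<in> RR k \<and> (\<forall>r\<in>RR (Suc k). cinner r v = 0)"
  by (simp add: did_T_def did_R_def ocompl_in_def)

lemma SS_Suc: "SS (Suc k) = osum (SS k) (did_T n Ms S (Suc k))"
  by (simp add: Let_def did_T_def did_R_def)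

lemma did_T_csubspace: "csubspace n (did_T n Ms S i)"
proof (cases i)
  case (Suc k)
  have "did_T n Ms S i = ocompl_in (RR k) (RR (Suc k))" by (simp add: Suc did_T_def did_R_def)
  moreover have "csubspace n (ocompl_in (RR k) (RR (Suc k)))"
    by (rule csubspace_ocompl[OF RR_csubspace]) (use RR_csubspace csubspace_carrier in blast)
  ultimately show ?thesis by simp
qed (simp add: did_T_def S)

text \<open>Key property of the layers: every non-zero \<open>v \<in> T\<^sub>k\<^sub>+\<^sub>1\<close> is moved by some Kraus operator partly
  into the previous layer \<open>T\<^sub>k\<close> (and not only into \<open>S\<^sub>k\<close>), since \<open>v \<notin> R\<^sub>k\<^sub>+\<^sub>1\<close> while \<open>v \<in> R\<^sub>k\<close> is not
  moved into \<open>S\<^sub>k\<^sub>-\<^sub>1\<close>.\<close>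

lemma did_T_escapes: assumes v: "v \<in> did_T n Ms S (Suc k)" and v0: "v \<noteq> 0\<^sub>v n"
  shows "\<exists>M\<in>set Ms. proj n (did_T n Ms S k) *\<^sub>v (M *\<^sub>v v) \<noteq> 0\<^sub>v n"
proof -
  have vR: "v \<in> RR k" and vperp: "\<forall>r\<in>RR (Suc k). cinner r v = 0" using v did_T_Suc_mem by auto
  have vc: "v \<in> carrier_vec n" using vR RR_csubspace csubspace_carrier by blast
  have "v \<notin> RR (Suc k)" using vperp v0 cinner_self_zero[OF vc] by blast
  then obtain M where M: "M \<in> set Ms" and nz: "proj n (SS k) *\<^sub>v (M *\<^sub>v v) \<noteq> 0\<^sub>v n"
    using vR unfolding RR_Suc by blast
  have Mv: "M *\<^sub>v v \<in> carrier_vec n" using Ms_mem[OF M] vc by simp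
  show ?thesis
  proof (cases k)
    case 0 thus ?thesis using M nz by (auto simp: did_T_def)
  next
    case (Suc k')
    have orth: "cinner a b = 0" if "a \<in> SS k'" "b \<in> did_T n Ms S (Suc k')" for a b
      using that SS_RR_orth did_T_Suc_mem by blast
    have "proj n (SS k) *\<^sub>v (M *\<^sub>v v) = proj n (SS k') *\<^sub>v (M *\<^sub>v v) + proj n (did_T n Ms S k) *\<^sub>v (M *\<^sub>v v)"
      unfolding Suc SS_Suc by (rule proj_osum[OF SS_csubspace did_T_csubspace orth Mv])
    moreover have "proj n (SS k') *\<^sub>v (M *\<^sub>v v) = 0\<^sub>v n" using vR M unfolding Suc RR_Suc by blast
    ultimately have "proj n (SS k) *\<^sub>v (M *\<^sub>v v) = proj n (did_T n Ms S k) *\<^sub>v (M *\<^sub>v v)"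
      using did_T_csubspace Mv by simp
    thus ?thesis using M nz by auto
  qed
qed

lemma did_T_nonzero: assumes ne: "did_R n Ms S (Suc (Suc k)) \<noteq> did_R n Ms S (Suc k)"
  shows "\<exists>w. w \<in> did_T n Ms S (Suc k) \<and> w \<noteq> 0\<^sub>v n"
proof -
  have "RR (Suc k) \<subseteq> RR k" unfolding RR_Suc by blast
  then obtain v where v: "v \<in> RR k" "v \<notin> RR (Suc k)" using ne by (auto simp: did_R_def)
  have R1: "csubspace n (RR (Suc k))" by (rule RR_csubspace)
  have vc: "v \<in> carrier_vec n" using v RR_csubspace csubspace_carrier by blast
  let ?p = "proj n (RR (Suc k)) *\<^sub>v v"
  have pR: "?p \<in> RR (Suc k)" using proj_in[OF R1 vc] .
  define w where "w = v - ?p"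
  have wR: "w \<in> RR k" unfolding w_def using csubspace_minus[OF RR_csubspace v(1)] pR \<open>RR (Suc k) \<subseteq> RR k\<close> by blast
  have wp: "\<forall>r\<in>RR (Suc k). cinner r w = 0" unfolding w_def using proj_orth[OF R1 vc] by blast
  have pc: "?p \<in> carrier_vec n" using R1 vc by simp
  have "w \<noteq> 0\<^sub>v n" using vec_diff_zero_iff[OF vc pc] pR v(2) by (auto simp: w_def)
  thus ?thesis using wR wp did_T_Suc_mem by blast
qed

text \<open>Positive definiteness of \<open>G\<^sub>k\<^sub>+\<^sub>1\<close> on \<open>T\<^sub>k\<^sub>+\<^sub>1\<close>: \<open>\<langle>v, G v\<rangle> = \<Sum>\<^sub>M \<parallel>\<Pi>\<^sub>T\<^sub>k M v\<parallel>\<^sup>2\<close> has a positive summand.\<close>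

lemma did_G_pos_def: "pos_def_on (did_T n Ms S (Suc k)) (did_G n Ms S (Suc k))"
  unfolding pos_def_on_def
proof (intro ballI impI conjI)
  let ?P = "proj n (did_T n Ms S (Suc k))" and ?Q = "proj n (did_T n Ms S k)"
  fix v assume v: "v \<in> did_T n Ms S (Suc k)" and "v \<noteq> 0\<^sub>v (dim_vec v)"
  have vc: "v \<in> carrier_vec n" using v did_T_csubspace csubspace_carrier by blast
  hence v0: "v \<noteq> 0\<^sub>v n" using \<open>v \<noteq> 0\<^sub>v (dim_vec v)\<close> by simp
  have Qc: "?Q \<in> carrier_mat n n" using did_T_csubspace by simp
  have T: "csubspace n (did_T n Ms S j)" for j by (rule did_T_csubspace)
  have "cinner v (did_G n Ms S (Suc k) *\<^sub>v v)
      = (\<Sum>M\<leftarrow>Ms. cinner (?Q *\<^sub>v (M *\<^sub>v (?P *\<^sub>v v))) (?Q *\<^sub>v (M *\<^sub>v (?P *\<^sub>v v))))"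
    unfolding did_G_compression diff_Suc_1
    by (rule compression_quadratic[OF Ms_carrier proj_carrier[OF T] proj_herm[OF T] proj_idem[OF T]
          proj_carrier[OF T] proj_herm[OF T] proj_idem[OF T] vc])
  also have "?P *\<^sub>v v = v" by (rule proj_fix[OF T v])
  finally have quad: "cinner v (did_G n Ms S (Suc k) *\<^sub>v v) = (\<Sum>M\<leftarrow>Ms. cinner (?Q *\<^sub>v (M *\<^sub>v v)) (?Q *\<^sub>v (M *\<^sub>v v)))" .
  show "Im (cinner v (did_G n Ms S (Suc k) *\<^sub>v v)) = 0"
    unfolding quad Im_sum_list by (simp add: cinner_self_Im)
  obtain M where M: "M \<in> set Ms" and nz: "?Q *\<^sub>v (M *\<^sub>v v) \<noteq> 0\<^sub>v n"
    using did_T_escapes[OF v v0] by blast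
  have "Re (cinner (?Q *\<^sub>v (M *\<^sub>v v)) (?Q *\<^sub>v (M *\<^sub>v v))) > 0"
    using cinner_self_pos[OF _ nz] Qc Ms_mem[OF M] vc by simp
  thus "Re (cinner v (did_G n Ms S (Suc k) *\<^sub>v v)) > 0"
    unfolding quad Re_sum_list by (rule sum_list_pos[OF cinner_self_Re M])
qed

end

lemma did_G_facts:
  fixes n i :: nat and Ms :: "complex mat list" and S :: "complex vec set"
  assumes K: "is_kraus n Ms" and S: "csubspace n S"
  defines "G \<equiv> did_G n Ms S i" and "P \<equiv> proj n (did_T n Ms S i)" and "Q \<equiv> proj n (did_T n Ms S (i - 1))"
  shows "G \<in> carrier_mat n n" and "adj G = G"
    and "\<forall>v\<in>did_T n Ms S i. G *\<^sub>v v \<in> did_T n Ms S i"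
    and "\<And>v. v \<in> carrier_vec n \<Longrightarrow> Re (cinner v (G *\<^sub>v v)) \<le> Re (cinner v v)"
    and "\<And>\<rho>. \<rho> \<in> carrier_mat n n \<Longrightarrow> P * \<rho> * P = \<rho> \<Longrightarrow> mtrace (Q * kraus_map n Ms \<rho>) = mtrace (G * \<rho>)"
proof -
  have Ms_carrier: "set Ms \<subseteq> carrier_mat n n" using K by (auto simp: is_kraus_def)
  have T: "csubspace n (did_T n Ms S j)" for j by (rule did_T_csubspace[OF S Ms_carrier])
  have P: "P \<in> carrier_mat n n" "adj P = P" "P * P = P" and Q: "Q \<in> carrier_mat n n" "adj Q = Q" "Q * Q = Q"
    using T by (simp_all add: P_def Q_def proj_herm proj_idem)
  note comp = compression_carrier compression_herm compression_range compression_trace compression_contraction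
  note c = comp[OF Ms_carrier P Q]
  have G: "G = compression n Ms Q P" by (simp add: G_def P_def Q_def did_G_compression)
  show Gc: "G \<in> carrier_mat n n" and "adj G = G" using c(1,2) by (simp_all add: G)
  show "\<forall>v\<in>did_T n Ms S i. G *\<^sub>v v \<in> did_T n Ms S i"
  proof
    fix v assume "v \<in> did_T n Ms S i"
    have vc: "v \<in> carrier_vec n" using \<open>v \<in> did_T n Ms S i\<close> T csubspace_carrier by blast
    have "G *\<^sub>v v = (P * G) *\<^sub>v v" using c(3) by (simp add: G)
    also have "\<dots> = P *\<^sub>v (G *\<^sub>v v)" by (rule assoc_mult_mat_vec[OF P(1) Gc vc])
    also have "\<dots> \<in> did_T n Ms S i" unfolding P_def by (rule proj_in[OF T mult_vec_carrier_nn[OF Gc vc]])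
    finally show "G *\<^sub>v v \<in> did_T n Ms S i" .
  qed
  show "Re (cinner v (G *\<^sub>v v)) \<le> Re (cinner v v)" if "v \<in> carrier_vec n" for v
    using c(5)[OF K that] by (simp add: G)
  show "mtrace (Q * kraus_map n Ms \<rho>) = mtrace (G * \<rho>)" if "\<rho> \<in> carrier_mat n n" "P * \<rho> * P = \<rho>" for \<rho>
    using c(4)[OF that] by (simp add: G)
qed

theorem mainTheorem6:
  fixes n N i :: nat and Ms :: "complex mat list" and S :: "complex vec set"
  assumes "is_kraus n Ms"
    and "csubspace n S"
    and "invariant_subspace n Ms S"
    and "did_success n Ms S N"
    and "1 \<le> i" and "i \<le> N"
  shows "pos_def_on (did_T n Ms S i) (did_G n Ms S i) \<and>
    (let Ti = did_T n Ms S i; Pi = proj n Ti; Pj = proj n (did_T n Ms S (i - 1));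
         lmin = Min (eigs_on Ti (did_G n Ms S i)); lmax = Max (eigs_on Ti (did_G n Ms S i));
         tr = (\<lambda>\<rho>. mtrace (Pj * kraus_map n Ms \<rho>))
     in (\<forall>\<rho>. density n \<rho> \<and> Pi * \<rho> * Pi = \<rho> \<longrightarrow>
            Im (tr \<rho>) = 0 \<and> lmin \<le> Re (tr \<rho>) \<and> Re (tr \<rho>) \<le> lmax)
        \<and> lmax \<le> 1
        \<and> (\<exists>\<rho>. density n \<rho> \<and> Pi * \<rho> * Pi = \<rho> \<and> tr \<rho> = complex_of_real lmin)
        \<and> (\<exists>\<rho>. density n \<rho> \<and> Pi * \<rho> * Pi = \<rho> \<and> tr \<rho> = complex_of_real lmax))"
proof -
  have Ms: "set Ms \<subseteq> carrier_mat n n" using assms(1) by (auto simp: is_kraus_def)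
  obtain k where i: "i = Suc k" using assms(5) by (cases i) auto
  let ?T = "did_T n Ms S i" and ?G = "did_G n Ms S i"
  let ?tr = "\<lambda>\<rho>. mtrace (proj n (did_T n Ms S (i - 1)) * kraus_map n Ms \<rho>)"
  let ?supported = "\<lambda>\<rho>. density n \<rho> \<and> proj n ?T * \<rho> * proj n ?T = \<rho>"
  have T: "csubspace n ?T" by (rule did_T_csubspace[OF assms(2) Ms])
  note G_facts = did_G_facts[OF assms(1,2), where i = i]
  obtain w where w: "w \<in> ?T" "w \<noteq> 0\<^sub>v n"
    using did_T_nonzero[OF assms(2) Ms, where k = k] assms(4-6) by (auto simp: did_success_def i)
  note range = hermitian_expectation_range[OF G_facts(1,2) T G_facts(3) w]
  have "\<And>v. v \<in> ?T \<Longrightarrow> Re (cinner v (?G *\<^sub>v v)) \<le> Re (cinner v v)"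
    using G_facts(4) T csubspace_carrier by blast
  hence lmax: "Max (eigs_on ?T ?G) \<le> 1" using eigs_on_le_one Max_in[OF range(1,2)] by blast
  have pos: "pos_def_on ?T ?G" unfolding i by (rule did_G_pos_def[OF assms(2) Ms])
  have tr: "?tr \<rho> = mtrace (?G * \<rho>)" if "?supported \<rho>" for \<rho>
    using G_facts(5) that by (simp add: density_def psd_def)
  have bounds: "\<forall>\<rho>. ?supported \<rho> \<longrightarrow>
      Im (?tr \<rho>) = 0 \<and> Min (eigs_on ?T ?G) \<le> Re (?tr \<rho>) \<and> Re (?tr \<rho>) \<le> Max (eigs_on ?T ?G)"
  proof (intro allI impI)
    fix \<rho> assume \<rho>: "?supported \<rho>"
    show "Im (?tr \<rho>) = 0 \<and> Min (eigs_on ?T ?G) \<le> Re (?tr \<rho>) \<and> Re (?tr \<rho>) \<le> Max (eigs_on ?T ?G)"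
      unfolding tr[OF \<rho>] using range(3) \<rho> by blast
  qed
  have attained: "\<exists>\<rho>. density n \<rho> \<and> proj n ?T * \<rho> * proj n ?T = \<rho> \<and> ?tr \<rho> = x"
    if "\<exists>\<rho>. density n \<rho> \<and> proj n ?T * \<rho> * proj n ?T = \<rho> \<and> mtrace (?G * \<rho>) = x" for x
    using that tr by metis
  show ?thesis unfolding Let_def
    using pos bounds attained[OF range(4)] attained[OF range(5)] lmax by (intro conjI)
qed

end
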